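(* Let $d\ge 1$ be an integer, let $\epsilon>0$, $\mu>-1$, $\alpha>0$, and put $\lambda:=\frac{d+1}{2}+\alpha$ and $C_{\lambda,\mu}:=\frac{2^{\lambda}\Gamma(\lambda)\Gamma(\mu+1)}{\Gamma(2\lambda+\mu)}$. Let $\widehat{\phi_{\mu,\alpha}^{(\epsilon)}}$ be the $d$-dimensional radial Fourier transform of the generalised Wendland function $\phi_{\mu,\alpha}^{(\epsilon)}$ (defined in the context). For $\gamma>0$ and $r>0$ define $$I_{\gamma}(r):=(2\pi)^{\frac d2}\int_0^r z\,J_\gamma^2(z)\,\widehat{\phi_{\mu,\alpha}^{(\epsilon)}}(z)\,dz .$$ Then $$I_{\gamma}(r)=(2\pi)^{\frac d2}\frac{C_{\lambda,\mu}\left(2^{\gamma}\Gamma(\gamma+1)\right)^{-2}}{\sqrt{2\pi}\,\epsilon^{d}}\,\frac{r^{2(\gamma+1)}}{2(\gamma+1)}\sum_{\ell=0}^{\infty}\frac{(\gamma+1)_\ell(\lambda)_\ell\left(-\frac{r^2}{4\epsilon^2}\right)^{\ell}}{(\gamma+2)_\ell\left(\lambda+\frac{\mu}{2}\right)_\ell\left(\lambda+\frac{\mu+1}{2}\right)_\ell\,\ell!}\;{}_2F_3\!\left(\gamma+1+\ell,\gamma+\tfrac12;\gamma+2+\ell,\gamma+1,2\gamma+1;-r^2\right).$$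
   Context: $J_\nu$ denotes the Bessel function of the first kind of order $\nu$. For $\epsilon>0$, $\mu>-1$, $\alpha>0$, the generalised Wendland function is $$\phi_{\mu,\alpha}^{(\epsilon)}(r):=\frac{1}{2^{\alpha-1}\Gamma(\alpha)}\int_{\epsilon r}^{1}(1-t)^{\mu}\,t\,\left(t^2-(\epsilon r)^2\right)^{\alpha-1}dt\quad\text{for } r\in[0,1/\epsilon],$$ and $\phi_{\mu,\alpha}^{(\epsilon)}(r)=0$ for $r>1/\epsilon$. Its $d$-dimensional radial Fourier transform is $\widehat{\phi}(z)=z^{1-\frac d2}\int_0^\infty \phi(y)\,y^{\frac d2}J_{\frac d2-1}(yz)\,dy$, which is known to equal $\frac{C_{\lambda,\mu}}{\sqrt{2\pi}\epsilon^d}\,{}_1F_2\!\left(\lambda;\lambda+\frac{\mu}{2},\lambda+\frac{\mu+1}{2};-\left(\frac{z}{2\epsilon}\right)^2\right)$. Here $(c)_n=\Gamma(c+n)/\Gamma(c)$ is the Pochhammer symbol and ${}_pF_q(a_1,\dots,a_p;b_1,\dots,b_q;z)=\sum_{j\ge0}\frac{\prod_i(a_i)_j}{\prod_i(b_i)_j}\frac{z^j}{j!}$ the generalised hypergeometric function. *)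

theory Defs
  imports "HOL-Analysis.Analysis"
begin

text \<open>At x = 0 we use the limiting value
  (1 if nu = 0, else 0); this point is irrelevant for all integrals below.\<close>
definition besselJ :: "real \<Rightarrow> real \<Rightarrow> real" where
  "besselJ \<nu> x =
     (if x = 0 then (if \<nu> = 0 then 1 else 0)
      else (\<Sum>k. (-1) ^ k * rGamma (real k + \<nu> + 1) / fact k * (x / 2) powr (2 * real k + \<nu>)))"

definition hypergeom :: "real list \<Rightarrow> real list \<Rightarrow> real \<Rightarrow> real" where
  "hypergeom as bs z =
     (\<Sum>j. prod_list (map (\<lambda>a. pochhammer a j) as) / prod_list (map (\<lambda>b. pochhammer b j) bs)
            * z ^ j / fact j)"

definition wendland :: "real \<Rightarrow> real \<Rightarrow> real \<Rightarrow> real \<Rightarrow> real" where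
  "wendland \<mu> \<alpha> \<epsilon> r =
     (if r \<le> 1 / \<epsilon> then
        1 / (2 powr (\<alpha> - 1) * Gamma \<alpha>) *
        integral {\<epsilon> * r..1} (\<lambda>t. (1 - t) powr \<mu> * t * (t\<^sup>2 - (\<epsilon> * r)\<^sup>2) powr (\<alpha> - 1))
      else 0)"

definition radial_FT :: "nat \<Rightarrow> (real \<Rightarrow> real) \<Rightarrow> real \<Rightarrow> real" where
  "radial_FT d \<phi> z =
     z powr (1 - real d / 2) *
     integral {0..} (\<lambda>y. \<phi> y * y powr (real d / 2) * besselJ (real d / 2 - 1) (y * z))"

end

theory Submission
  imports Defs
begin

text \<open>Both factors of the integrand are power series in z^2 with infinite radius of convergence.
  Squaring the Bessel series (a Cauchy product, summed by a Chu--Vandermonde convolution) gives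
  J_gamma(z)^2 = (z/2)^(2 gamma) / Gamma(gamma+1)^2 * 1F2(gamma+1/2; gamma+1, 2 gamma+1; -z^2).
  For the Fourier transform, the series of J_(d/2-1)(y z) is integrated term by term against the
  Wendland function, whose moments are products of two Beta integrals (Tonelli in the (y,t)-plane);
  Legendre duplication turns the result into the stated 1F2 in -(z/(2 eps))^2. Finally the product
  of the two series is integrated term by term over [0, r], and for a fixed index l of the Fourier
  series the remaining sum is the 2F3, because
  (gamma+1)_l (gamma+1+l)_n / ((gamma+2)_l (gamma+2+l)_n) = (gamma+1) / (gamma+1+l+n).\<close>

section \<open>Power series with factorially decaying coefficients\<close>

lemma summable_abs_ratio_bound:
  fixes t \<rho> :: "nat \<Rightarrow> real"
  assumes rec: "\<And>n. t (Suc n) = t n * (\<rho> n * x / real (Suc n))" and bound: "\<And>n. \<bar>\<rho> n\<bar> \<le> K"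
  shows "summable (\<lambda>n. \<bar>t n\<bar>)"
proof (rule summable_comparison_test')
  have K: "0 \<le> K" using bound[of 0] by linarith
  show "summable (\<lambda>n. \<bar>t 0\<bar> * (inverse (fact n) * (K * \<bar>x\<bar>) ^ n))"
    by (intro summable_mult summable_exp)
  show "norm \<bar>t n\<bar> \<le> \<bar>t 0\<bar> * (inverse (fact n) * (K * \<bar>x\<bar>) ^ n)" for n
  proof (induction n)
    case (Suc n)
    have "norm \<bar>t (Suc n)\<bar> = \<bar>\<rho> n\<bar> * \<bar>x\<bar> / real (Suc n) * \<bar>t n\<bar>"
      unfolding rec by (simp add: abs_mult)
    also have "\<dots> \<le> K * \<bar>x\<bar> / real (Suc n) * (\<bar>t 0\<bar> * (inverse (fact n) * (K * \<bar>x\<bar>) ^ n))"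
      using Suc bound K by (intro mult_mono divide_right_mono mult_right_mono) auto
    also have "\<dots> = \<bar>t 0\<bar> * (inverse (fact (Suc n)) * (K * \<bar>x\<bar>) ^ Suc n)"
      by (simp add: field_simps)
    finally show ?case .
  qed simp
qed

definition hypergeom12_coeff :: "real \<Rightarrow> real \<Rightarrow> real \<Rightarrow> nat \<Rightarrow> real" where
  "hypergeom12_coeff a b c j = pochhammer a j / (pochhammer b j * pochhammer c j * fact j)"

lemma hypergeom_1F2: "hypergeom [a] [b, c] x = (\<Sum>j. hypergeom12_coeff a b c j * x ^ j)"
  unfolding hypergeom_def hypergeom12_coeff_def by simp

lemma summable_abs_hypergeom12:
  assumes b: "b > 0" and c: "c > 0"
  shows "summable (\<lambda>j. \<bar>hypergeom12_coeff a b c j * x ^ j\<bar>)"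
proof (rule summable_abs_ratio_bound)
  fix j
  have "pochhammer b j > 0" "pochhammer c j > 0"
    using b c by (auto intro!: pochhammer_pos)
  then show "hypergeom12_coeff a b c (Suc j) * x ^ Suc j = hypergeom12_coeff a b c j * x ^ j *
      ((a + real j) / ((b + real j) * (c + real j)) * x / real (Suc j))"
    unfolding hypergeom12_coeff_def pochhammer_rec' fact_Suc using b c by (simp add: field_simps)
  have num: "\<bar>a + real j\<bar> \<le> (\<bar>a\<bar> / b + 1) * (b + real j)"
  proof -
    have "\<bar>a + real j\<bar> \<le> \<bar>a\<bar> + real j" by linarith
    also have "\<dots> \<le> \<bar>a\<bar> + \<bar>a\<bar> * real j / b + b + real j" using b by simp
    also have "\<dots> = (\<bar>a\<bar> / b + 1) * (b + real j)" using b by (simp add: field_simps)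
    finally show ?thesis .
  qed
  have "\<bar>(a + real j) / ((b + real j) * (c + real j))\<bar> = \<bar>a + real j\<bar> / ((b + real j) * (c + real j))"
    using b c by (simp add: abs_divide abs_mult)
  also have "\<dots> \<le> (\<bar>a\<bar> / b + 1) * (b + real j) / ((b + real j) * c)"
    using b c num by (intro frac_le mult_left_mono) auto
  also have "\<dots> = (\<bar>a\<bar> / b + 1) / c"
    using b by simp
  finally show "\<bar>(a + real j) / ((b + real j) * (c + real j))\<bar> \<le> (\<bar>a\<bar> / b + 1) / c" .
qed

section \<open>The square of a Bessel function\<close>

lemma summable_abs_bessel_series:
  fixes \<nu> w :: real
  assumes "\<nu> > -1"
  shows "summable (\<lambda>k. \<bar>(- w) ^ k / (pochhammer (\<nu> + 1) k * fact k)\<bar>)"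
proof (rule summable_abs_ratio_bound)
  fix n
  have "pochhammer (\<nu> + 1) n > 0" using assms by (intro pochhammer_pos) simp
  then show "(- w) ^ Suc n / (pochhammer (\<nu> + 1) (Suc n) * fact (Suc n))
      = (- w) ^ n / (pochhammer (\<nu> + 1) n * fact n) * (1 / (\<nu> + 1 + real n) * - w / real (Suc n))"
    unfolding pochhammer_rec' fact_Suc using assms by (simp add: field_simps)
  show "\<bar>1 / (\<nu> + 1 + real n)\<bar> \<le> 1 / (\<nu> + 1)"
    using assms by (simp add: field_simps)
qed

lemma besselJ_eq_series:
  fixes \<nu> x :: real
  assumes \<nu>: "\<nu> > -1" and x: "x > 0"
  shows "besselJ \<nu> x = (x / 2) powr \<nu> * rGamma (\<nu> + 1) *
           (\<Sum>k. (- (x\<^sup>2 / 4)) ^ k / (pochhammer (\<nu> + 1) k * fact k))"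
proof -
  have summand: "(-1) ^ k * rGamma (real k + \<nu> + 1) / fact k * (x / 2) powr (2 * real k + \<nu>)
      = (x / 2) powr \<nu> * rGamma (\<nu> + 1) * ((- (x\<^sup>2 / 4)) ^ k / (pochhammer (\<nu> + 1) k * fact k))" for k
  proof -
    have "pochhammer (\<nu> + 1) k > 0" using \<nu> by (intro pochhammer_pos) simp
    then have rG: "rGamma (real k + \<nu> + 1) = rGamma (\<nu> + 1) / pochhammer (\<nu> + 1) k"
      using pochhammer_rGamma[of "\<nu> + 1" k] by (simp add: field_simps add_ac)
    have "(x / 2) powr (2 * real k) = (x / 2) powr real (2 * k)" by simp
    also have "\<dots> = (x / 2) ^ (2 * k)" by (rule powr_realpow) (use x in simp)
    also have "\<dots> = (x\<^sup>2 / 4) ^ k" by (simp add: power_mult power_divide)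
    finally have "(x / 2) powr (2 * real k + \<nu>) = (x / 2) powr \<nu> * (x\<^sup>2 / 4) ^ k"
      by (simp add: powr_add)
    then show ?thesis unfolding rG power_minus[of "x\<^sup>2 / 4"] by simp
  qed
  have "summable (\<lambda>k. (- (x\<^sup>2 / 4)) ^ k / (pochhammer (\<nu> + 1) k * fact k))"
    by (rule summable_rabs_cancel[OF summable_abs_bessel_series[OF \<nu>]])
  moreover have "besselJ \<nu> x
      = (\<Sum>k. (-1) ^ k * rGamma (real k + \<nu> + 1) / fact k * (x / 2) powr (2 * real k + \<nu>))"
    unfolding besselJ_def using x by simp
  ultimately show ?thesis
    unfolding summand by (simp only: suminf_mult)
qed

lemma pochhammer_quotient_reflect:
  fixes x :: real
  assumes "i \<le> n" "pochhammer x i \<noteq> 0"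
  shows "pochhammer x n / pochhammer x i = (-1) ^ (n - i) * pochhammer (1 - x - real n) (n - i)"
proof -
  have "pochhammer x n = pochhammer x i * pochhammer (x + of_nat i) (n - i)"
    by (rule pochhammer_product) (rule assms(1))
  also have "x + of_nat i = (x + real n - 1) - of_nat (n - i) + 1"
    using assms(1) by (simp add: of_nat_diff)
  also have "pochhammer ((x + real n - 1) - of_nat (n - i) + 1) (n - i) = (-1) ^ (n - i) * pochhammer (- (x + real n - 1)) (n - i)"
    by (rule pochhammer_minus')
  also have "- (x + real n - 1) = 1 - x - real n" by simp
  finally show ?thesis
    using assms(2) by simp
qed

text \<open>A Chu--Vandermonde convolution: reflecting the Pochhammer symbols turns the sum into
  \<open>(-2\<gamma>-2n)\<^sub>n\<close>, which Legendre duplication for Pochhammer symbols rewrites.\<close>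

lemma sum_inverse_pochhammer_convolution:
  fixes \<gamma> :: real
  assumes "\<gamma> > -1/2"
  shows "(\<Sum>i\<le>n. 1 / (pochhammer (\<gamma> + 1) i * fact i * (pochhammer (\<gamma> + 1) (n - i) * fact (n - i))))
       = 4 ^ n * hypergeom12_coeff (\<gamma> + 1/2) (\<gamma> + 1) (2 * \<gamma> + 1) n"
proof -
  define P where "P = pochhammer (\<gamma> + 1) n"
  define m where "m = - (\<gamma> + real n)"
  define S where "S = (\<Sum>i\<le>n. 1 / (pochhammer (\<gamma> + 1) i * fact i * (pochhammer (\<gamma> + 1) (n - i) * fact (n - i))))"
  have pp: "pochhammer (\<gamma> + 1) j > 0" for j using assms by (intro pochhammer_pos) simp
  have Q0: "pochhammer (2 * \<gamma> + 1) n > 0" using assms by (intro pochhammer_pos) simp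
  have m: "1 - (\<gamma> + 1) - real n = m" unfolding m_def by simp
  have reflect: "P / pochhammer (\<gamma> + 1) j = (-1) ^ (n - j) * pochhammer m (n - j)" if "j \<le> n" for j
    using pochhammer_quotient_reflect[OF that, of "\<gamma> + 1"] pp[of j] unfolding P_def m by simp
  have "P * P * fact n * S = (\<Sum>i\<le>n. of_nat (n choose i) * (P / pochhammer (\<gamma> + 1) i) * (P / pochhammer (\<gamma> + 1) (n - i)))"
    unfolding S_def sum_distrib_left
  proof (rule sum.cong[OF refl])
    fix i assume "i \<in> {..n}"
    then have "real (n choose i) = fact n / (fact i * fact (n - i))"
      using binomial_fact[of i n] by simp
    then show "P * P * fact n * (1 / (pochhammer (\<gamma> + 1) i * fact i * (pochhammer (\<gamma> + 1) (n - i) * fact (n - i))))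
        = of_nat (n choose i) * (P / pochhammer (\<gamma> + 1) i) * (P / pochhammer (\<gamma> + 1) (n - i))"
      using pp[of i] pp[of "n - i"] by (simp add: field_simps)
  qed
  also have "\<dots> = (-1) ^ n * (\<Sum>i\<le>n. of_nat (n choose i) * pochhammer m i * pochhammer m (n - i))"
    unfolding sum_distrib_left
  proof (rule sum.cong[OF refl])
    fix i assume "i \<in> {..n}"
    then have i: "i \<le> n" by simp
    have "n - (n - i) = i" using i by simp
    then have "P / pochhammer (\<gamma> + 1) (n - i) = (-1) ^ i * pochhammer m i"
      using reflect[of "n - i"] by simp
    moreover have "(-1::real) ^ (n - i) * (-1) ^ i = (-1) ^ n"
      using i by (simp flip: power_add)
    ultimately show "of_nat (n choose i) * (P / pochhammer (\<gamma> + 1) i) * (P / pochhammer (\<gamma> + 1) (n - i))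
        = (-1) ^ n * (of_nat (n choose i) * pochhammer m i * pochhammer m (n - i))"
      unfolding reflect[OF i] by (simp add: mult_ac)
  qed
  also have "\<dots> = (-1) ^ n * pochhammer (m + m) n"
    by (simp only: pochhammer_binomial_sum)
  also have "\<dots> = pochhammer (2 * \<gamma> + 1 + real n) n"
  proof -
    have "m + m = - (2 * \<gamma> + 2 * real n)" "2 * \<gamma> + 2 * real n - real n + 1 = 2 * \<gamma> + 1 + real n"
      unfolding m_def by simp_all
    moreover have "(-1::real) ^ n * (-1) ^ n = 1" by (simp flip: power_mult_distrib)
    ultimately show ?thesis
      using pochhammer_minus[of "2 * \<gamma> + 2 * real n" n] by (simp only: mult.assoc[symmetric])
  qed
  also have "\<dots> = 4 ^ n * pochhammer (\<gamma> + 1/2) n * P / pochhammer (2 * \<gamma> + 1) n"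
  proof -
    have e: "2 * (\<gamma> + 1/2) = 2 * \<gamma> + 1" "\<gamma> + 1/2 + 1/2 = \<gamma> + 1" "(of_nat (2 ^ (2 * n)) :: real) = 4 ^ n"
      by (simp_all add: power_mult)
    have "pochhammer (2 * \<gamma> + 1) (2 * n) = 4 ^ n * pochhammer (\<gamma> + 1/2) n * P"
      using pochhammer_double[of "\<gamma> + 1/2" n] unfolding e P_def .
    moreover have "pochhammer (2 * \<gamma> + 1) (2 * n) = pochhammer (2 * \<gamma> + 1) n * pochhammer (2 * \<gamma> + 1 + real n) n"
      unfolding mult_2 by (rule pochhammer_product')
    ultimately show ?thesis using Q0 by (simp add: field_simps)
  qed
  finally have PPS: "P * P * fact n * S = 4 ^ n * pochhammer (\<gamma> + 1/2) n * P / pochhammer (2 * \<gamma> + 1) n" .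
  have nz: "P \<noteq> 0" "(fact n :: real) \<noteq> 0"
    unfolding P_def using pp[of n] by simp_all
  have "S = (P * P * fact n * S) / (P * P * fact n)"
    using nz by simp
  also have "\<dots> = 4 ^ n * (pochhammer (\<gamma> + 1/2) n / (P * pochhammer (2 * \<gamma> + 1) n * fact n))"
    unfolding PPS using nz by (simp add: field_simps)
  finally show ?thesis
    unfolding hypergeom12_coeff_def S_def P_def .
qed


lemma besselJ_sq_eq_hypergeom:
  fixes \<gamma> z :: real
  assumes \<gamma>: "\<gamma> > -1/2" and z: "z > 0"
  shows "(besselJ \<gamma> z)\<^sup>2
      = (z / 2) powr (2 * \<gamma>) * (rGamma (\<gamma> + 1))\<^sup>2 * hypergeom [\<gamma> + 1/2] [\<gamma> + 1, 2 * \<gamma> + 1] (- z\<^sup>2)"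
proof -
  define a where "a = (\<lambda>k. (- (z\<^sup>2 / 4)) ^ k / (pochhammer (\<gamma> + 1) k * fact k))"
  have J: "besselJ \<gamma> z = (z / 2) powr \<gamma> * rGamma (\<gamma> + 1) * suminf a"
    unfolding a_def by (rule besselJ_eq_series) (use \<gamma> z in auto)
  have sa: "summable (\<lambda>k. norm (a k))"
    unfolding a_def real_norm_def by (rule summable_abs_bessel_series) (use \<gamma> in simp)
  have "(\<Sum>i\<le>n. a i * a (n - i)) = hypergeom12_coeff (\<gamma> + 1/2) (\<gamma> + 1) (2 * \<gamma> + 1) n * (- z\<^sup>2) ^ n" for n
  proof -
    have "(\<Sum>i\<le>n. a i * a (n - i)) = (- (z\<^sup>2 / 4)) ^ n *
        (\<Sum>i\<le>n. 1 / (pochhammer (\<gamma> + 1) i * fact i * (pochhammer (\<gamma> + 1) (n - i) * fact (n - i))))"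
      unfolding sum_distrib_left
    proof (rule sum.cong[OF refl])
      fix i assume "i \<in> {..n}"
      then have "(- (z\<^sup>2 / 4)) ^ i * (- (z\<^sup>2 / 4)) ^ (n - i) = (- (z\<^sup>2 / 4)) ^ n"
        by (simp flip: power_add)
      then show "a i * a (n - i) = (- (z\<^sup>2 / 4)) ^ n *
          (1 / (pochhammer (\<gamma> + 1) i * fact i * (pochhammer (\<gamma> + 1) (n - i) * fact (n - i))))"
        unfolding a_def by (simp add: field_simps)
    qed
    also have "\<dots> = ((- (z\<^sup>2 / 4)) ^ n * 4 ^ n) * hypergeom12_coeff (\<gamma> + 1/2) (\<gamma> + 1) (2 * \<gamma> + 1) n"
      by (simp add: sum_inverse_pochhammer_convolution[OF \<gamma>])
    finally show ?thesis by (simp flip: power_mult_distrib)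
  qed
  then have S: "suminf a * suminf a = hypergeom [\<gamma> + 1/2] [\<gamma> + 1, 2 * \<gamma> + 1] (- z\<^sup>2)"
    unfolding Cauchy_product[OF sa sa] hypergeom_1F2 by simp
  have P: "(z / 2) powr \<gamma> * (z / 2) powr \<gamma> = (z / 2) powr (2 * \<gamma>)"
    by (simp flip: powr_add)
  have "(besselJ \<gamma> z)\<^sup>2 = ((z / 2) powr \<gamma> * (z / 2) powr \<gamma>) * (rGamma (\<gamma> + 1))\<^sup>2 * (suminf a * suminf a)"
    unfolding J by (simp add: power2_eq_square mult_ac)
  then show ?thesis
    unfolding S P .
qed

section \<open>Moments of the generalised Wendland function\<close>

lemma Beta_pos_real: "a > 0 \<Longrightarrow> b > 0 \<Longrightarrow> Beta a b > (0::real)"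
  by (simp add: Beta_def)

lemma nn_integral_power_one_minus_sq_powr:
  fixes \<alpha> :: real and m :: nat
  assumes a: "\<alpha> > 0"
  shows "(\<integral>\<^sup>+s. ennreal (indicator {0..1} s * (s ^ m * (1 - s\<^sup>2) powr (\<alpha> - 1))) \<partial>lborel)
         = ennreal (Beta ((real m + 1) / 2) \<alpha> / 2)"
proof -
  define f where "f = (\<lambda>u::real. u powr ((real m + 1) / 2 - 1) * (1 - u) powr (\<alpha> - 1) / 2)"
  have "(f has_integral (Beta ((real m + 1) / 2) \<alpha> / 2)) {0..1}"
    unfolding f_def using has_integral_Beta_real[of "(real m + 1) / 2" \<alpha>] a
    by (intro has_integral_divide) auto
  then have "(\<integral>\<^sup>+x. ennreal (f x) * indicator {0..1} x \<partial>lborel) = ennreal (Beta ((real m + 1) / 2) \<alpha> / 2)"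
    by (rule nn_integral_has_integral_lebesgue'[rotated]) (auto simp: f_def)
  moreover have "(\<integral>\<^sup>+x. ennreal (f x) * indicator {0..1} x \<partial>lborel)
      = (\<integral>\<^sup>+x. ennreal (f x * indicator {(\<lambda>s. s\<^sup>2) 0..(\<lambda>s. s\<^sup>2) 1} x) \<partial>lborel)"
    by (intro nn_integral_cong) (auto split: split_indicator)
  moreover have "\<dots> = (\<integral>\<^sup>+x. ennreal (f ((\<lambda>s. s\<^sup>2) x) * (2 * x) * indicator {0..1} x) \<partial>lborel)"
  proof (rule nn_integral_substitution)
    show "set_borel_measurable borel {(\<lambda>s. s\<^sup>2) 0..(\<lambda>s. s\<^sup>2) (1::real)} f"
      unfolding set_borel_measurable_def f_def by measurable
    show "((\<lambda>s. s\<^sup>2) has_real_derivative 2 * x) (at x)" for x :: real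
      by (auto intro!: derivative_eq_intros)
    show "continuous_on {0..1::real} (\<lambda>x. 2 * x)" by (intro continuous_intros)
  qed auto
  moreover have "\<dots> = (\<integral>\<^sup>+s. ennreal (indicator {0..1} s * (s ^ m * (1 - s\<^sup>2) powr (\<alpha> - 1))) \<partial>lborel)"
  proof (rule nn_integral_cong_AE)
    show "AE x in lborel. ennreal (f ((\<lambda>s. s\<^sup>2) x) * (2 * x) * indicator {0..1} x) =
        ennreal (indicator {0..1} x * (x ^ m * (1 - x\<^sup>2) powr (\<alpha> - 1)))"
      using AE_lborel_singleton[of 0]
    proof eventually_elim
      case (elim x)
      show ?case
      proof (cases "x \<in> {0..1}")
        case True
        with elim have x: "x > 0" by auto
        have "(x\<^sup>2) powr ((real m + 1) / 2 - 1) = (x powr 2) powr ((real m + 1) / 2 - 1)"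
          using x by (simp add: powr_realpow)
        also have "\<dots> = x powr (2 * ((real m + 1) / 2 - 1))" by (simp add: powr_powr)
        also have "2 * ((real m + 1) / 2 - 1) = real m - 1" by (simp add: field_simps)
        finally have "(x\<^sup>2) powr ((real m + 1) / 2 - 1) = x powr (real m - 1)" .
        moreover have "x powr (real m - 1) * x = x ^ m"
          using x by (simp add: powr_diff powr_realpow)
        ultimately show ?thesis using True unfolding f_def by (simp add: algebra_simps)
      qed auto
    qed
  qed
  ultimately show ?thesis by simp
qed

text \<open>The integrand defining the Wendland function, as a function on the \<open>(y, t)\<close>-plane that
  vanishes outside \<open>0 \<le> \<epsilon> y \<le> t \<le> 1\<close>, so that Tonelli's theorem applies to its moments.\<close>

definition wendland_integrand :: "real \<Rightarrow> real \<Rightarrow> real \<Rightarrow> real \<Rightarrow> real \<Rightarrow> real" where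
  "wendland_integrand \<mu> \<alpha> \<epsilon> y t =
     (if 0 \<le> y \<and> \<epsilon> * y \<le> t \<and> t \<le> 1 \<and> 0 \<le> t then (1 - t) powr \<mu> * t * (t\<^sup>2 - (\<epsilon> * y)\<^sup>2) powr (\<alpha> - 1) else 0)"

lemma wendland_integrand_nonneg: "wendland_integrand \<mu> \<alpha> \<epsilon> y t \<ge> 0"
  unfolding wendland_integrand_def by auto

lemma measurable_wendland_integrand [measurable]:
  "(\<lambda>(y, t). wendland_integrand \<mu> \<alpha> \<epsilon> y t) \<in> borel_measurable (lborel \<Otimes>\<^sub>M lborel)"
  unfolding wendland_integrand_def case_prod_beta by measurable

lemma measurable_wendland_integrand_slice [measurable]:
  "(\<lambda>y. wendland_integrand \<mu> \<alpha> \<epsilon> y t) \<in> borel_measurable borel"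
  unfolding wendland_integrand_def by measurable

lemma wendland_integrand_scaled:
  fixes \<epsilon> t s :: real
  assumes e: "\<epsilon> > 0" and t: "0 < t" "t \<le> 1"
  shows "(t / \<epsilon> * s) ^ m * wendland_integrand \<mu> \<alpha> \<epsilon> (t / \<epsilon> * s) t
       = indicator {0..1} s * (s ^ m * (1 - s\<^sup>2) powr (\<alpha> - 1))
         * ((t / \<epsilon>) ^ m * (1 - t) powr \<mu> * t * t powr (2 * \<alpha> - 2))"
proof (cases "0 \<le> s \<and> s \<le> 1")
  case True
  have ec: "\<epsilon> * (t / \<epsilon> * s) = t * s" using e by simp
  have "t * s \<le> t" using True t by (intro mult_left_le) auto
  then have cond: "0 \<le> t / \<epsilon> * s \<and> \<epsilon> * (t / \<epsilon> * s) \<le> t \<and> t \<le> 1 \<and> 0 \<le> t"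
    unfolding ec using True t e by simp
  have "t\<^sup>2 - (\<epsilon> * (t / \<epsilon> * s))\<^sup>2 = t\<^sup>2 * (1 - s\<^sup>2)"
    unfolding ec by (simp add: algebra_simps power_mult_distrib)
  then have "(t\<^sup>2 - (\<epsilon> * (t / \<epsilon> * s))\<^sup>2) powr (\<alpha> - 1) = (t\<^sup>2 * (1 - s\<^sup>2)) powr (\<alpha> - 1)"
    by (simp only:)
  also have "\<dots> = (t\<^sup>2) powr (\<alpha> - 1) * (1 - s\<^sup>2) powr (\<alpha> - 1)"
    by (rule powr_mult)
  also have "(t\<^sup>2) powr (\<alpha> - 1) = t powr (2 * \<alpha> - 2)"
  proof -
    have "t\<^sup>2 = t powr 2" using t by simp
    then have "(t\<^sup>2) powr (\<alpha> - 1) = t powr (2 * (\<alpha> - 1))" by (simp add: powr_powr)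
    then show ?thesis by (simp add: algebra_simps)
  qed
  finally have pw: "(t\<^sup>2 - (\<epsilon> * (t / \<epsilon> * s))\<^sup>2) powr (\<alpha> - 1) = t powr (2 * \<alpha> - 2) * (1 - s\<^sup>2) powr (\<alpha> - 1)" .
  have "wendland_integrand \<mu> \<alpha> \<epsilon> (t / \<epsilon> * s) t = (1 - t) powr \<mu> * t * (t powr (2 * \<alpha> - 2) * (1 - s\<^sup>2) powr (\<alpha> - 1))"
    unfolding wendland_integrand_def pw[symmetric] by (simp only: cond if_True simp_thms)
  then show ?thesis
    unfolding power_mult_distrib using True by (simp add: mult_ac)
next
  case False
  have "t / \<epsilon> * s < 0 \<or> \<epsilon> * (t / \<epsilon> * s) > t"
  proof (cases "s < 0")
    case True
    then show ?thesis using e t by (metis divide_neg_pos mult_pos_neg times_divide_eq_left)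
  next
    case False
    then have "s > 1" using \<open>\<not> (0 \<le> s \<and> s \<le> 1)\<close> by auto
    then show ?thesis using e t by (simp add: mult_strict_left_mono[of 1 s t, simplified])
  qed
  then show ?thesis using False unfolding wendland_integrand_def by auto
qed

lemma nn_integral_wendland_integrand:
  fixes \<epsilon> \<alpha> \<mu> t :: real and m :: nat
  assumes e: "\<epsilon> > 0" and a: "\<alpha> > 0"
  shows "(\<integral>\<^sup>+y. ennreal (y ^ m * wendland_integrand \<mu> \<alpha> \<epsilon> y t) \<partial>lborel)
       = ennreal (t powr (real m + 2 * \<alpha>) * (1 - t) powr \<mu> * (Beta ((real m + 1) / 2) \<alpha> / 2 / \<epsilon> ^ (m + 1)))
         * indicator {0..1} t"
proof (cases "0 < t \<and> t \<le> 1")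
  case False
  then have "wendland_integrand \<mu> \<alpha> \<epsilon> y t = 0" for y
    unfolding wendland_integrand_def by auto
  moreover have "t = 0 \<or> t \<notin> {0..1}" using False by auto
  ultimately show ?thesis by auto
next
  case True
  define c where "c = t / \<epsilon>"
  define K where "K = c ^ m * (1 - t) powr \<mu> * t * t powr (2 * \<alpha> - 2)"
  define B where "B = Beta ((real m + 1) / 2) \<alpha> / 2"
  have c: "c > 0" using e True by (simp add: c_def)
  have K: "K \<ge> 0" using c True by (simp add: K_def)
  have B: "B \<ge> 0" using Beta_pos_real[of "(real m + 1) / 2" \<alpha>] a by (simp add: B_def)
  have "(\<integral>\<^sup>+y. ennreal (y ^ m * wendland_integrand \<mu> \<alpha> \<epsilon> y t) \<partial>lborel)
      = ennreal c * (\<integral>\<^sup>+s. ennreal ((0 + c * s) ^ m * wendland_integrand \<mu> \<alpha> \<epsilon> (0 + c * s) t) \<partial>lborel)"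
    using nn_integral_real_affine[of "\<lambda>y. ennreal (y ^ m * wendland_integrand \<mu> \<alpha> \<epsilon> y t)" c 0] c
    by simp
  also have "(\<integral>\<^sup>+s. ennreal ((0 + c * s) ^ m * wendland_integrand \<mu> \<alpha> \<epsilon> (0 + c * s) t) \<partial>lborel)
      = (\<integral>\<^sup>+s. ennreal (indicator {0..1} s * (s ^ m * (1 - s\<^sup>2) powr (\<alpha> - 1)) * K) \<partial>lborel)"
    using wendland_integrand_scaled[OF e True[THEN conjunct1] True[THEN conjunct2]]
    unfolding c_def K_def by simp
  also have "\<dots> = (\<integral>\<^sup>+s. ennreal (indicator {0..1} s * (s ^ m * (1 - s\<^sup>2) powr (\<alpha> - 1))) * ennreal K \<partial>lborel)"
    by (simp only: ennreal_mult''[OF K])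
  also have "\<dots> = ennreal B * ennreal K"
    unfolding B_def nn_integral_power_one_minus_sq_powr[OF a, symmetric] by (rule nn_integral_multc) measurable
  also have "ennreal c * (ennreal B * ennreal K) = ennreal (c * B * K)"
    using c B K by (simp add: ennreal_mult mult.assoc)
  also have "c * B * K = t powr (real m + 2 * \<alpha>) * (1 - t) powr \<mu> * (B / \<epsilon> ^ (m + 1))"
  proof -
    have "t ^ m * t * t * t powr (2 * \<alpha> - 2) = t powr real m * t powr 1 * t powr 1 * t powr (2 * \<alpha> - 2)"
      using True by (simp add: powr_realpow)
    also have "\<dots> = t powr (real m + 1 + 1 + (2 * \<alpha> - 2))"
      by (simp only: powr_add)
    also have "real m + 1 + 1 + (2 * \<alpha> - 2) = real m + 2 * \<alpha>"
      by simp
    finally have "t powr (real m + 2 * \<alpha>) = t ^ m * t * t * t powr (2 * \<alpha> - 2)" ..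
    then show ?thesis
      unfolding c_def K_def using e by (simp add: field_simps power_divide)
  qed
  finally show ?thesis using True by (simp add: B_def)
qed

text \<open>The unnormalised Wendland function as a Lebesgue integral. It agrees with the gauge integral
  in the definition of wendland only where it is finite, which holds almost everywhere.\<close>

definition wendland_nn :: "real \<Rightarrow> real \<Rightarrow> real \<Rightarrow> real \<Rightarrow> ennreal" where
  "wendland_nn \<mu> \<alpha> \<epsilon> y = (\<integral>\<^sup>+t. ennreal (wendland_integrand \<mu> \<alpha> \<epsilon> y t) \<partial>lborel)"

definition wendland_nn_moment :: "real \<Rightarrow> real \<Rightarrow> real \<Rightarrow> nat \<Rightarrow> real" where
  "wendland_nn_moment \<mu> \<alpha> \<epsilon> m =
     Beta (real m + 2 * \<alpha> + 1) (\<mu> + 1) * (Beta ((real m + 1) / 2) \<alpha> / 2 / \<epsilon> ^ (m + 1))"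

lemma wendland_nn_moment_pos:
  assumes "\<epsilon> > 0" "\<alpha> > 0" "\<mu> > -1"
  shows "wendland_nn_moment \<mu> \<alpha> \<epsilon> m > 0"
  unfolding wendland_nn_moment_def
  using Beta_pos_real[of "real m + 2 * \<alpha> + 1" "\<mu> + 1"] Beta_pos_real[of "(real m + 1) / 2" \<alpha>] assms
  by simp

lemma measurable_wendland_nn [measurable]: "wendland_nn \<mu> \<alpha> \<epsilon> \<in> borel_measurable lborel"
proof -
  have "(\<lambda>(y, t). ennreal (wendland_integrand \<mu> \<alpha> \<epsilon> y t)) \<in> borel_measurable (lborel \<Otimes>\<^sub>M lborel)"
    unfolding case_prod_beta by measurable
  then show ?thesis
    unfolding wendland_nn_def[abs_def] by (rule lborel.borel_measurable_nn_integral)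
qed

lemma nn_integral_moment_wendland_integrand:
  fixes \<epsilon> \<alpha> \<mu> :: real and m :: nat
  assumes e: "\<epsilon> > 0" and a: "\<alpha> > 0" and mu: "\<mu> > -1"
  shows "(\<integral>\<^sup>+y. (\<integral>\<^sup>+t. ennreal (y ^ m * wendland_integrand \<mu> \<alpha> \<epsilon> y t) \<partial>lborel) \<partial>lborel)
       = ennreal (wendland_nn_moment \<mu> \<alpha> \<epsilon> m)"
proof -
  define C where "C = Beta ((real m + 1) / 2) \<alpha> / 2 / \<epsilon> ^ (m + 1)"
  have C: "C \<ge> 0" using Beta_pos_real[of "(real m + 1) / 2" \<alpha>] a e by (simp add: C_def)
  have "(\<lambda>(y, t). ennreal (y ^ m * wendland_integrand \<mu> \<alpha> \<epsilon> y t)) \<in> borel_measurable (lborel \<Otimes>\<^sub>M lborel)"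
    unfolding case_prod_beta by measurable
  then have "(\<integral>\<^sup>+y. (\<integral>\<^sup>+t. ennreal (y ^ m * wendland_integrand \<mu> \<alpha> \<epsilon> y t) \<partial>lborel) \<partial>lborel)
      = (\<integral>\<^sup>+t. (\<integral>\<^sup>+y. ennreal (y ^ m * wendland_integrand \<mu> \<alpha> \<epsilon> y t) \<partial>lborel) \<partial>lborel)"
    by (subst lborel_pair.Fubini') simp_all
  also have "\<dots> = (\<integral>\<^sup>+t. ennreal (t powr (real m + 2 * \<alpha>) * (1 - t) powr \<mu> * C) * indicator {0..1} t \<partial>lborel)"
    unfolding C_def by (intro nn_integral_cong nn_integral_wendland_integrand[OF e a])
  also have "\<dots> = ennreal (Beta (real m + 2 * \<alpha> + 1) (\<mu> + 1) * C)"
  proof (rule nn_integral_has_integral_lebesgue')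
    have "((\<lambda>t. t powr (real m + 2 * \<alpha> + 1 - 1) * (1 - t) powr (\<mu> + 1 - 1)) has_integral
        Beta (real m + 2 * \<alpha> + 1) (\<mu> + 1)) {0..1}"
      by (rule has_integral_Beta_real) (use a mu in auto)
    then show "((\<lambda>t. t powr (real m + 2 * \<alpha>) * (1 - t) powr \<mu> * C) has_integral
        Beta (real m + 2 * \<alpha> + 1) (\<mu> + 1) * C) {0..1}"
      by (intro has_integral_mult_left) simp
  qed (use C in simp)
  finally show ?thesis unfolding C_def wendland_nn_moment_def .
qed

lemma wendland_nn_eq_0:
  assumes e: "\<epsilon> > 0" and y: "y < 0 \<or> y > 1 / \<epsilon>"
  shows "wendland_nn \<mu> \<alpha> \<epsilon> y = 0"
proof -
  have "\<epsilon> * y > 1" if "y > 1 / \<epsilon>" using that e by (simp add: field_simps)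
  then have "wendland_integrand \<mu> \<alpha> \<epsilon> y t = 0" for t
    using y unfolding wendland_integrand_def by auto
  then show ?thesis unfolding wendland_nn_def by simp
qed

lemma AE_wendland_nn_finite:
  assumes "\<epsilon> > 0" "\<alpha> > 0" "\<mu> > -1"
  shows "AE y in lborel. wendland_nn \<mu> \<alpha> \<epsilon> y \<noteq> \<infinity>"
proof (rule nn_integral_PInf_AE)
  show "(\<integral>\<^sup>+y. wendland_nn \<mu> \<alpha> \<epsilon> y \<partial>lborel) \<noteq> \<infinity>"
    using nn_integral_moment_wendland_integrand[OF assms, of 0] unfolding wendland_nn_def by simp
qed measurable

lemma wendland_eq_wendland_nn:
  assumes e: "\<epsilon> > 0" and y: "0 \<le> y" "y \<le> 1 / \<epsilon>" and fin: "wendland_nn \<mu> \<alpha> \<epsilon> y \<noteq> \<infinity>"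
  shows "wendland \<mu> \<alpha> \<epsilon> y = 1 / (2 powr (\<alpha> - 1) * Gamma \<alpha>) * enn2real (wendland_nn \<mu> \<alpha> \<epsilon> y)"
proof -
  define h where "h = (\<lambda>t. (1 - t) powr \<mu> * t * (t\<^sup>2 - (\<epsilon> * y)\<^sup>2) powr (\<alpha> - 1))"
  have W: "wendland_integrand \<mu> \<alpha> \<epsilon> y t = (if t \<in> {\<epsilon> * y..1} then h t else 0)" for t
  proof -
    have "\<epsilon> * y \<ge> 0" using e y by simp
    then show ?thesis using y unfolding wendland_integrand_def h_def by auto
  qed
  have "((\<lambda>t. wendland_integrand \<mu> \<alpha> \<epsilon> y t) has_integral enn2real (wendland_nn \<mu> \<alpha> \<epsilon> y)) UNIV"
  proof (rule nn_integral_has_integral)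
    show "(\<lambda>t. wendland_integrand \<mu> \<alpha> \<epsilon> y t) \<in> borel_measurable borel"
      unfolding wendland_integrand_def by measurable
    show "(\<integral>\<^sup>+ t. ennreal (wendland_integrand \<mu> \<alpha> \<epsilon> y t) \<partial>lborel) = ennreal (enn2real (wendland_nn \<mu> \<alpha> \<epsilon> y))"
      using fin unfolding wendland_nn_def by (simp add: ennreal_enn2real_if)
  qed (simp_all add: wendland_integrand_nonneg)
  then have "integral {\<epsilon> * y..1} h = enn2real (wendland_nn \<mu> \<alpha> \<epsilon> y)"
    unfolding W has_integral_restrict_UNIV by (rule integral_unique)
  then show ?thesis unfolding wendland_def h_def using y by simp
qed

lemma wendland_nn_power_nonneg:
  assumes "\<epsilon> > 0"
  shows "enn2real (wendland_nn \<mu> \<alpha> \<epsilon> y) * y ^ m \<ge> 0"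
proof (cases "y < 0")
  case True
  then show ?thesis using wendland_nn_eq_0[OF assms, of y] by simp
qed simp

lemma
  assumes e: "\<epsilon> > 0" and a: "\<alpha> > 0" and mu: "\<mu> > -1"
  shows integrable_moment_wendland_nn: "integrable lborel (\<lambda>y. enn2real (wendland_nn \<mu> \<alpha> \<epsilon> y) * y ^ m)"
    and integral_moment_wendland_nn:
      "(\<integral>y. enn2real (wendland_nn \<mu> \<alpha> \<epsilon> y) * y ^ m \<partial>lborel) = wendland_nn_moment \<mu> \<alpha> \<epsilon> m"
proof -
  have "(\<integral>\<^sup>+y. ennreal (enn2real (wendland_nn \<mu> \<alpha> \<epsilon> y) * y ^ m) \<partial>lborel)
      = (\<integral>\<^sup>+y. (\<integral>\<^sup>+t. ennreal (y ^ m * wendland_integrand \<mu> \<alpha> \<epsilon> y t) \<partial>lborel) \<partial>lborel)"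
  proof (rule nn_integral_cong_AE)
    show "AE y in lborel. ennreal (enn2real (wendland_nn \<mu> \<alpha> \<epsilon> y) * y ^ m)
        = (\<integral>\<^sup>+t. ennreal (y ^ m * wendland_integrand \<mu> \<alpha> \<epsilon> y t) \<partial>lborel)"
      using AE_wendland_nn_finite[OF e a mu]
    proof eventually_elim
      case (elim y)
      show ?case
      proof (cases "y < 0")
        case True
        then have "wendland_integrand \<mu> \<alpha> \<epsilon> y t = 0" for t
          unfolding wendland_integrand_def by auto
        then show ?thesis using True wendland_nn_eq_0[OF e, of y] by simp
      next
        case False
        then have "(\<integral>\<^sup>+t. ennreal (y ^ m * wendland_integrand \<mu> \<alpha> \<epsilon> y t) \<partial>lborel)
            = (\<integral>\<^sup>+t. ennreal (y ^ m) * ennreal (wendland_integrand \<mu> \<alpha> \<epsilon> y t) \<partial>lborel)"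
          by (intro nn_integral_cong) (simp add: ennreal_mult wendland_integrand_nonneg)
        also have "\<dots> = ennreal (y ^ m) * wendland_nn \<mu> \<alpha> \<epsilon> y"
          unfolding wendland_nn_def by (rule nn_integral_cmult) measurable
        also have "\<dots> = ennreal (y ^ m) * ennreal (enn2real (wendland_nn \<mu> \<alpha> \<epsilon> y))"
          using elim by (simp add: ennreal_enn2real_if)
        also have "\<dots> = ennreal (enn2real (wendland_nn \<mu> \<alpha> \<epsilon> y) * y ^ m)"
          using False by (simp add: ennreal_mult mult.commute)
        finally show ?thesis ..
      qed
    qed
  qed
  also have "\<dots> = ennreal (wendland_nn_moment \<mu> \<alpha> \<epsilon> m)"
    by (rule nn_integral_moment_wendland_integrand[OF e a mu])
  finally have "integrable lborel (\<lambda>y. enn2real (wendland_nn \<mu> \<alpha> \<epsilon> y) * y ^ m) \<and>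
      (\<integral>y. enn2real (wendland_nn \<mu> \<alpha> \<epsilon> y) * y ^ m \<partial>lborel) = wendland_nn_moment \<mu> \<alpha> \<epsilon> m"
    using wendland_nn_moment_pos[OF e a mu, of m]
    by (subst (asm) nn_integral_eq_integrable) (simp_all add: wendland_nn_power_nonneg[OF e])
  then show "integrable lborel (\<lambda>y. enn2real (wendland_nn \<mu> \<alpha> \<epsilon> y) * y ^ m)"
    "(\<integral>y. enn2real (wendland_nn \<mu> \<alpha> \<epsilon> y) * y ^ m \<partial>lborel) = wendland_nn_moment \<mu> \<alpha> \<epsilon> m"
    by auto
qed

lemma AE_lborel_negligible_exception:
  assumes "AE x in lborel. P x"
  obtains S where "negligible S" "\<And>x. \<not> P x \<Longrightarrow> x \<in> S"
proof -
  from assms obtain N where N: "{x \<in> space lborel. \<not> P x} \<subseteq> N" "emeasure lborel N = 0" "N \<in> sets lborel"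
    by (rule AE_E)
  then have "N \<in> null_sets lborel" by auto
  then have "N \<in> null_sets lebesgue" by (rule null_sets_completionI)
  then have "negligible N" by (simp add: negligible_iff_null_sets)
  moreover have "\<And>x. \<not> P x \<Longrightarrow> x \<in> N" using N(1) by auto
  ultimately show ?thesis using that by blast
qed

lemma
  fixes c :: "nat \<Rightarrow> real" and p :: nat
  assumes e: "\<epsilon> > 0" and a: "\<alpha> > 0" and mu: "\<mu> > -1"
    and entire: "\<And>x. summable (\<lambda>k. \<bar>c k * x ^ k\<bar>)"
    and moments: "summable (\<lambda>k. \<bar>c k\<bar> * wendland_nn_moment \<mu> \<alpha> \<epsilon> (p + 2 * k))"
  shows has_integral_wendland_nn_power_series:
      "((\<lambda>y. \<Sum>k. c k * (enn2real (wendland_nn \<mu> \<alpha> \<epsilon> y) * y ^ (p + 2 * k)))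
          has_integral (\<Sum>k. c k * wendland_nn_moment \<mu> \<alpha> \<epsilon> (p + 2 * k))) {0..}"
    and summable_wendland_nn_moment_series:
      "summable (\<lambda>k. c k * wendland_nn_moment \<mu> \<alpha> \<epsilon> (p + 2 * k))"
proof -
  define f where "f = (\<lambda>k y. c k * (enn2real (wendland_nn \<mu> \<alpha> \<epsilon> y) * y ^ (p + 2 * k)))"
  have int: "integrable lborel (f k)" for k
    unfolding f_def by (intro integrable_mult_right integrable_moment_wendland_nn[OF e a mu])
  have intf: "integral\<^sup>L lborel (f k) = c k * wendland_nn_moment \<mu> \<alpha> \<epsilon> (p + 2 * k)" for k
    unfolding f_def by (simp add: integral_moment_wendland_nn[OF e a mu])
  have "norm (f k y) = \<bar>c k\<bar> * (enn2real (wendland_nn \<mu> \<alpha> \<epsilon> y) * y ^ (p + 2 * k))" for k y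
    unfolding f_def real_norm_def abs_mult[of "c k"]
    using wendland_nn_power_nonneg[OF e, of \<mu> \<alpha> y "p + 2 * k"] by simp
  then have "(\<integral>y. norm (f k y) \<partial>lborel) = \<bar>c k\<bar> * wendland_nn_moment \<mu> \<alpha> \<epsilon> (p + 2 * k)" for k
    by (simp add: integral_moment_wendland_nn[OF e a mu])
  then have sabs: "summable (\<lambda>k. \<integral>y. norm (f k y) \<partial>lborel)"
    using moments by simp
  have AEs: "AE y in lborel. summable (\<lambda>k. norm (f k y))"
  proof (rule AE_I2)
    fix y :: real
    have "norm (f k y) = \<bar>enn2real (wendland_nn \<mu> \<alpha> \<epsilon> y) * y ^ p\<bar> * \<bar>c k * (y\<^sup>2) ^ k\<bar>" for k
      unfolding f_def by (simp add: abs_mult power_add power_mult)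
    then show "summable (\<lambda>k. norm (f k y))"
      by (simp only:) (rule summable_mult[OF entire])
  qed
  have "((\<lambda>y. \<Sum>k. f k y) has_integral (\<Sum>k. c k * wendland_nn_moment \<mu> \<alpha> \<epsilon> (p + 2 * k))) UNIV"
    using has_integral_integral_lborel[OF integrable_suminf[OF int AEs sabs]]
    unfolding integral_suminf[OF int AEs sabs] intf .
  moreover have "(\<lambda>y. if y \<in> {0..} then \<Sum>k. f k y else 0) = (\<lambda>y. \<Sum>k. f k y)"
  proof
    fix y :: real
    show "(if y \<in> {0..} then \<Sum>k. f k y else 0) = (\<Sum>k. f k y)"
    proof (cases "y \<in> {0..}")
      case False
      then have "f k y = 0" for k
        using wendland_nn_eq_0[OF e, of y] by (simp add: f_def)
      then show ?thesis using False by simp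
    qed simp
  qed
  ultimately have "((\<lambda>y. if y \<in> {0..} then \<Sum>k. f k y else 0)
      has_integral (\<Sum>k. c k * wendland_nn_moment \<mu> \<alpha> \<epsilon> (p + 2 * k))) UNIV"
    by (simp only:)
  then have "((\<lambda>y. \<Sum>k. f k y) has_integral (\<Sum>k. c k * wendland_nn_moment \<mu> \<alpha> \<epsilon> (p + 2 * k))) {0..}"
    unfolding has_integral_restrict_UNIV .
  then show "((\<lambda>y. \<Sum>k. c k * (enn2real (wendland_nn \<mu> \<alpha> \<epsilon> y) * y ^ (p + 2 * k)))
      has_integral (\<Sum>k. c k * wendland_nn_moment \<mu> \<alpha> \<epsilon> (p + 2 * k))) {0..}"
    unfolding f_def .
  show "summable (\<lambda>k. c k * wendland_nn_moment \<mu> \<alpha> \<epsilon> (p + 2 * k))"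
    using summable_integral[OF int AEs sabs] unfolding intf .
qed

section \<open>The Fourier transform of the Wendland function\<close>

lemma Gamma_legendre_duplication_real:
  fixes x :: real
  assumes x: "x > 0"
  shows "Gamma x * Gamma (x + 1/2) = 2 powr (1 - 2 * x) * sqrt pi * Gamma (2 * x)"
proof -
  have n1: "complex_of_real x \<notin> \<int>\<^sub>\<le>\<^sub>0"
  proof -
    have "x \<notin> \<int>\<^sub>\<le>\<^sub>0" using x nonpos_Ints_nonpos by force
    then show ?thesis by (metis of_real_in_nonpos_Ints_iff)
  qed
  have n2: "complex_of_real x + 1/2 \<notin> \<int>\<^sub>\<le>\<^sub>0"
  proof -
    have "complex_of_real x + 1/2 = complex_of_real (x + 1/2)" by simp
    moreover have "x + 1/2 \<notin> \<int>\<^sub>\<le>\<^sub>0" using x nonpos_Ints_nonpos by force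
    ultimately show ?thesis by (metis of_real_in_nonpos_Ints_iff)
  qed
  have "Gamma (complex_of_real x) * Gamma (complex_of_real x + 1/2) =
      exp ((1 - 2 * complex_of_real x) * of_real (ln 2)) * of_real (sqrt pi) * Gamma (2 * complex_of_real x)"
    by (rule Gamma_legendre_duplication[OF n1 n2])
  moreover have "Gamma (complex_of_real x) * Gamma (complex_of_real x + 1/2) = complex_of_real (Gamma x * Gamma (x + 1/2))"
  proof -
    have "complex_of_real x + 1/2 = complex_of_real (x + 1/2)" by simp
    then show ?thesis by (simp only: Gamma_complex_of_real of_real_mult)
  qed
  moreover have "exp ((1 - 2 * complex_of_real x) * of_real (ln 2)) = complex_of_real (2 powr (1 - 2 * x))"
  proof -
    have "(1 - 2 * complex_of_real x) * of_real (ln 2) = complex_of_real ((1 - 2 * x) * ln 2)" by simp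
    then have "exp ((1 - 2 * complex_of_real x) * of_real (ln 2)) = complex_of_real (exp ((1 - 2 * x) * ln 2))"
      by (simp only: exp_of_real)
    then show ?thesis by (simp add: powr_def)
  qed
  moreover have "Gamma (2 * complex_of_real x) = complex_of_real (Gamma (2 * x))"
  proof -
    have "2 * complex_of_real x = complex_of_real (2 * x)" by simp
    then show ?thesis by (simp only: Gamma_complex_of_real)
  qed
  ultimately have "complex_of_real (Gamma x * Gamma (x + 1/2)) = complex_of_real (2 powr (1 - 2 * x) * sqrt pi * Gamma (2 * x))"
    by simp
  then show ?thesis by (simp only: of_real_eq_iff)
qed

lemma Gamma_add_of_nat_real:
  fixes x :: real
  assumes "x > 0"
  shows "Gamma (x + of_nat k) = Gamma x * pochhammer x k"
proof -
  have "x \<notin> \<int>\<^sub>\<le>\<^sub>0" using assms nonpos_Ints_nonpos by force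
  then have "pochhammer x k = Gamma (x + of_nat k) / Gamma x" by (rule pochhammer_Gamma)
  moreover have "Gamma x > 0" using assms by simp
  ultimately show ?thesis by simp
qed

lemma wendland_FT_constant:
  fixes z D \<alpha> lam :: real
  assumes z: "z > 0" and D: "D \<ge> 1" and a: "\<alpha> > 0" and lam: "lam = (D + 1) / 2 + \<alpha>"
  shows "z powr (1 - D / 2) * (z / 2) powr (D / 2 - 1) / 2 powr (\<alpha> - 1) * Gamma (2 * lam - 1) / Gamma (lam - 1/2) / 2
       = 2 powr lam * Gamma lam / sqrt (2 * pi)"
proof -
  have l0: "lam - 1/2 = D / 2 + \<alpha>" using lam by (simp add: field_simps)
  have l: "lam - 1/2 > 0" unfolding l0 using D a by linarith
  have dup: "Gamma (lam - 1/2) * Gamma lam = 2 powr (1 - 2 * (lam - 1/2)) * sqrt pi * Gamma (2 * (lam - 1/2))"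
    using Gamma_legendre_duplication_real[OF l] by simp
  have g: "Gamma (lam - 1/2) > 0" using l by simp
  have e1: "z powr (1 - D / 2) * (z / 2) powr (D / 2 - 1) = 2 powr (1 - D / 2)"
  proof -
    have m: "1 - D / 2 = - (D / 2 - 1)" by simp
    have A: "(z / 2) powr (D / 2 - 1) = z powr (D / 2 - 1) / 2 powr (D / 2 - 1)"
      using z by (simp add: powr_divide)
    have B: "z powr (1 - D / 2) = 1 / z powr (D / 2 - 1)" unfolding m by (rule powr_minus_divide)
    have C: "(2::real) powr (1 - D / 2) = 1 / 2 powr (D / 2 - 1)" unfolding m by (rule powr_minus_divide)
    have P: "z powr (D / 2 - 1) > 0" using z by simp
    show ?thesis unfolding A B C using P by simp
  qed
  have e2: "Gamma (2 * lam - 1) / Gamma (lam - 1/2) = Gamma lam / (2 powr (2 - 2 * lam) * sqrt pi)"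
  proof -
    have "2 * (lam - 1/2) = 2 * lam - 1" by simp
    then have "Gamma (lam - 1/2) * Gamma lam = 2 powr (2 - 2 * lam) * sqrt pi * Gamma (2 * lam - 1)"
      using dup by (simp add: algebra_simps)
    then show ?thesis using g by (simp add: field_simps)
  qed
  have e3: "sqrt (2 * pi) = 2 powr (1/2) * sqrt pi"
    by (simp add: real_sqrt_mult powr_half_sqrt)
  have "z powr (1 - D / 2) * (z / 2) powr (D / 2 - 1) / 2 powr (\<alpha> - 1) * Gamma (2 * lam - 1) / Gamma (lam - 1/2) / 2
      = (z powr (1 - D / 2) * (z / 2) powr (D / 2 - 1)) / 2 powr (\<alpha> - 1) * (Gamma (2 * lam - 1) / Gamma (lam - 1/2)) / 2"
    by (simp only: times_divide_eq_right)
  also have "\<dots> = 2 powr (1 - D / 2) / 2 powr (\<alpha> - 1) / 2 powr (2 - 2 * lam) / 2 * (Gamma lam / sqrt pi)"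
    unfolding e1 e2 by (simp add: field_simps)
  also have "2 powr (1 - D / 2) / 2 powr (\<alpha> - 1) / 2 powr (2 - 2 * lam) / 2 = 2 powr ((1 - D / 2) - (\<alpha> - 1) - (2 - 2 * lam) - 1)"
    by (simp add: powr_diff)
  also have "(1 - D / 2) - (\<alpha> - 1) - (2 - 2 * lam) - 1 = lam - 1/2" using lam by (simp add: field_simps)
  also have "2 powr lam * Gamma lam / sqrt (2 * pi) = 2 powr (lam - 1/2) * (Gamma lam / sqrt pi)"
  proof -
    have h: "(2::real) powr lam = 2 powr (1/2) * 2 powr (lam - 1/2)" by (simp flip: powr_add)
    show ?thesis unfolding e3 h by (simp add: field_simps)
  qed
  ultimately show ?thesis by simp
qed



lemma wendland_nn_moment_Gamma:
  fixes d k :: nat and \<epsilon> \<mu> \<alpha> :: real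
  assumes d: "d \<ge> 1" and e: "\<epsilon> > 0" and mu: "\<mu> > -1" and a: "\<alpha> > 0"
  defines "lam \<equiv> (real d + 1) / 2 + \<alpha>"
  shows "wendland_nn_moment \<mu> \<alpha> \<epsilon> (d - 1 + 2 * k) =
    Gamma (2 * lam - 1) * pochhammer (lam - 1/2) k * pochhammer lam k * Gamma (\<mu> + 1)
      / (Gamma (2 * lam + \<mu>) * pochhammer (lam + \<mu> / 2) k * pochhammer (lam + (\<mu> + 1) / 2) k)
    * (Gamma (real d / 2) * pochhammer (real d / 2) k * Gamma \<alpha> / (Gamma (lam - 1/2) * pochhammer (lam - 1/2) k))
    / 2 / (\<epsilon> ^ d * (\<epsilon>\<^sup>2) ^ k)"
proof -
  have rm: "real (d - 1 + 2 * k) = real d - 1 + 2 * real k" using d by (simp add: of_nat_diff)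
  have rd: "real d \<ge> 1" using d by simp
  have l1: "2 * lam - 1 > 0" "lam - 1/2 > 0" "2 * lam + \<mu> > 0" using rd a mu unfolding lam_def by (simp_all add: field_simps)
  have d2: "real d / 2 > 0" using d by simp
  have A1: "real (d - 1 + 2 * k) + 2 * \<alpha> + 1 = (2 * lam - 1) + of_nat (2 * k)" unfolding rm lam_def by (simp add: field_simps)
  have A2: "real (d - 1 + 2 * k) + 2 * \<alpha> + 1 + (\<mu> + 1) = (2 * lam + \<mu>) + of_nat (2 * k)" unfolding rm lam_def by (simp add: field_simps)
  have A3: "(real (d - 1 + 2 * k) + 1) / 2 = real d / 2 + of_nat k" unfolding rm by (simp add: field_simps)
  have A4: "(real (d - 1 + 2 * k) + 1) / 2 + \<alpha> = (lam - 1/2) + of_nat k" unfolding rm lam_def by (simp add: field_simps)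
  have A5: "d - 1 + 2 * k + 1 = d + 2 * k" using d by simp
  have P1: "pochhammer (2 * lam - 1) (2 * k) = 4 ^ k * pochhammer (lam - 1/2) k * pochhammer lam k"
  proof -
    have "pochhammer (2 * (lam - 1/2)) (2 * k) = of_nat (2 ^ (2 * k)) * pochhammer (lam - 1/2) k * pochhammer (lam - 1/2 + 1/2) k"
      by (rule pochhammer_double)
    moreover have "2 * (lam - 1/2) = 2 * lam - 1" "lam - 1/2 + 1/2 = lam" by simp_all
    moreover have "(of_nat (2 ^ (2 * k)) :: real) = 4 ^ k" by (simp add: power_mult)
    ultimately show ?thesis by simp
  qed
  have P2: "pochhammer (2 * lam + \<mu>) (2 * k) = 4 ^ k * pochhammer (lam + \<mu> / 2) k * pochhammer (lam + (\<mu> + 1) / 2) k"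
  proof -
    have "pochhammer (2 * (lam + \<mu> / 2)) (2 * k) = of_nat (2 ^ (2 * k)) * pochhammer (lam + \<mu> / 2) k * pochhammer (lam + \<mu> / 2 + 1/2) k"
      by (rule pochhammer_double)
    moreover have "2 * (lam + \<mu> / 2) = 2 * lam + \<mu>" "lam + \<mu> / 2 + 1/2 = lam + (\<mu> + 1) / 2" by (simp_all add: field_simps)
    moreover have "(of_nat (2 ^ (2 * k)) :: real) = 4 ^ k" by (simp add: power_mult)
    ultimately show ?thesis by simp
  qed
  have B1: "Beta (real (d - 1 + 2 * k) + 2 * \<alpha> + 1) (\<mu> + 1) =
      Gamma (2 * lam - 1) * (4 ^ k * pochhammer (lam - 1/2) k * pochhammer lam k) * Gamma (\<mu> + 1)
      / (Gamma (2 * lam + \<mu>) * (4 ^ k * pochhammer (lam + \<mu> / 2) k * pochhammer (lam + (\<mu> + 1) / 2) k))"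
    unfolding Beta_def A2 unfolding A1 Gamma_add_of_nat_real[OF l1(1)] Gamma_add_of_nat_real[OF l1(3)] P1 P2 ..
  have B2: "Beta ((real (d - 1 + 2 * k) + 1) / 2) \<alpha> =
      Gamma (real d / 2) * pochhammer (real d / 2) k * Gamma \<alpha> / (Gamma (lam - 1/2) * pochhammer (lam - 1/2) k)"
    unfolding Beta_def A4 unfolding A3 Gamma_add_of_nat_real[OF d2] Gamma_add_of_nat_real[OF l1(2)] ..
  have E: "\<epsilon> ^ (d - 1 + 2 * k + 1) = \<epsilon> ^ d * (\<epsilon>\<^sup>2) ^ k"
    unfolding A5 by (simp add: power_add power_mult)
  have f4: "(4::real) ^ k \<noteq> 0" by simp
  show ?thesis unfolding wendland_nn_moment_def B1 B2 E using f4 by (simp add: field_simps)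
qed

lemma wendland_FT_coeff:
  fixes d k :: nat and \<epsilon> \<mu> \<alpha> z :: real
  assumes d: "d \<ge> 1" and e: "\<epsilon> > 0" and mu: "\<mu> > -1" and a: "\<alpha> > 0" and z: "z > 0"
  defines "lam \<equiv> (real d + 1) / 2 + \<alpha>"
  shows "z powr (1 - real d / 2) * (1 / (2 powr (\<alpha> - 1) * Gamma \<alpha>) * (z / 2) powr (real d / 2 - 1) * rGamma (real d / 2)
           * ((- (z\<^sup>2 / 4)) ^ k / (pochhammer (real d / 2) k * fact k))) * wendland_nn_moment \<mu> \<alpha> \<epsilon> (d - 1 + 2 * k)
       = (2 powr lam * Gamma lam * Gamma (\<mu> + 1) / Gamma (2 * lam + \<mu>)) / (sqrt (2 * pi) * \<epsilon> ^ d)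
           * (hypergeom12_coeff lam (lam + \<mu> / 2) (lam + (\<mu> + 1) / 2) k * (- (1 / (4 * \<epsilon>\<^sup>2))) ^ k * (z\<^sup>2) ^ k)"
proof -
  have rd: "real d \<ge> 1" using d by simp
  have l1: "lam - 1/2 > 0" "2 * lam + \<mu> > 0" "lam > 0" "lam + \<mu> / 2 > 0" "lam + (\<mu> + 1) / 2 > 0"
    using rd a mu unfolding lam_def by (simp_all add: field_simps)
  have CI: "z powr (1 - real d / 2) * (z / 2) powr (real d / 2 - 1) / 2 powr (\<alpha> - 1) * Gamma (2 * lam - 1) / Gamma (lam - 1/2) / 2
       = 2 powr lam * Gamma lam / sqrt (2 * pi)"
    by (rule wendland_FT_constant[OF z rd a]) (simp add: lam_def)
  have pos: "Gamma (real d / 2) > 0" "Gamma \<alpha> > 0" "Gamma (lam - 1/2) > 0" "Gamma (2 * lam + \<mu>) > 0"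
    "pochhammer (lam - 1/2) k > 0" "pochhammer (real d / 2) k > 0"
    "pochhammer (lam + \<mu> / 2) k > 0" "pochhammer (lam + (\<mu> + 1) / 2) k > 0"
    using l1 a rd by (auto intro!: pochhammer_pos)
  have rg: "rGamma (real d / 2) = 1 / Gamma (real d / 2)" by (simp add: rGamma_inverse_Gamma field_simps)
  have zz: "(- (z\<^sup>2 / 4)) ^ k = (- (1 / (4 * \<epsilon>\<^sup>2))) ^ k * (z\<^sup>2) ^ k * (\<epsilon>\<^sup>2) ^ k"
  proof -
    have h: "- (z\<^sup>2 / 4) = (- (1 / (4 * \<epsilon>\<^sup>2))) * z\<^sup>2 * \<epsilon>\<^sup>2" using e by (simp add: field_simps)
    show ?thesis by (subst h) (simp only: power_mult_distrib)
  qed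
  define X where "X = z powr (1 - real d / 2) * (z / 2) powr (real d / 2 - 1) / 2 powr (\<alpha> - 1) * Gamma (2 * lam - 1) / Gamma (lam - 1/2) / 2"
  have "z powr (1 - real d / 2) * (1 / (2 powr (\<alpha> - 1) * Gamma \<alpha>) * (z / 2) powr (real d / 2 - 1) * rGamma (real d / 2)
           * ((- (z\<^sup>2 / 4)) ^ k / (pochhammer (real d / 2) k * fact k))) * wendland_nn_moment \<mu> \<alpha> \<epsilon> (d - 1 + 2 * k)
      = X * ((- (1 / (4 * \<epsilon>\<^sup>2))) ^ k * (z\<^sup>2) ^ k) * pochhammer lam k * Gamma (\<mu> + 1)
          / (Gamma (2 * lam + \<mu>) * pochhammer (lam + \<mu> / 2) k * pochhammer (lam + (\<mu> + 1) / 2) k * fact k * \<epsilon> ^ d)"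
    unfolding wendland_nn_moment_Gamma[OF d e mu a] rg zz X_def lam_def[symmetric] using pos e
    by (simp add: field_simps)
  also have "\<dots> = (2 powr lam * Gamma lam * Gamma (\<mu> + 1) / Gamma (2 * lam + \<mu>)) / (sqrt (2 * pi) * \<epsilon> ^ d)
           * (hypergeom12_coeff lam (lam + \<mu> / 2) (lam + (\<mu> + 1) / 2) k * (- (1 / (4 * \<epsilon>\<^sup>2))) ^ k * (z\<^sup>2) ^ k)"
    unfolding X_def CI hypergeom12_coeff_def using pos e by (simp add: field_simps)
  finally show ?thesis .
qed

lemma wendland_besselJ_series:
  fixes d :: nat and \<epsilon> \<mu> \<alpha> z y :: real
  assumes d: "d \<ge> 1" and e: "\<epsilon> > 0" and z: "z > 0" and y: "y > 0" and fin: "wendland_nn \<mu> \<alpha> \<epsilon> y \<noteq> \<infinity>"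
  defines "ck \<equiv> \<lambda>k. 1 / (2 powr (\<alpha> - 1) * Gamma \<alpha>) * (z / 2) powr (real d / 2 - 1) * rGamma (real d / 2)
           * ((- (z\<^sup>2 / 4)) ^ k / (pochhammer (real d / 2) k * fact k))"
  shows "wendland \<mu> \<alpha> \<epsilon> y * y powr (real d / 2) * besselJ (real d / 2 - 1) (y * z)
       = (\<Sum>k. ck k * (enn2real (wendland_nn \<mu> \<alpha> \<epsilon> y) * y ^ (d - 1 + 2 * k)))"
proof (cases "y \<le> 1 / \<epsilon>")
  case False
  then have "wendland_nn \<mu> \<alpha> \<epsilon> y = 0" using wendland_nn_eq_0[OF e] by auto
  moreover have "wendland \<mu> \<alpha> \<epsilon> y = 0" using False unfolding wendland_def by simp
  ultimately show ?thesis by simp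
next
  case True
  define Kw where "Kw = 1 / (2 powr (\<alpha> - 1) * Gamma \<alpha>)"
  define ph where "ph = enn2real (wendland_nn \<mu> \<alpha> \<epsilon> y)"
  have W: "wendland \<mu> \<alpha> \<epsilon> y = Kw * ph"
    unfolding Kw_def ph_def by (rule wendland_eq_wendland_nn[OF e _ True fin]) (use y in simp)
  have nu: "real d / 2 - 1 > -1" using d by simp
  have nu1: "real d / 2 - 1 + 1 = real d / 2" by simp
  have J: "besselJ (real d / 2 - 1) (y * z) = (y * z / 2) powr (real d / 2 - 1) * rGamma (real d / 2) *
      (\<Sum>k. (- ((y * z)\<^sup>2 / 4)) ^ k / (pochhammer (real d / 2) k * fact k))"
    using besselJ_eq_series[OF nu, of "y * z"] y z unfolding nu1 by simp
  have s: "summable (\<lambda>k. (- ((y * z)\<^sup>2 / 4)) ^ k / (pochhammer (real d / 2) k * fact k))"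
    using summable_rabs_cancel[OF summable_abs_bessel_series[OF nu, of "(y * z)\<^sup>2 / 4"]] unfolding nu1 .
  have pw: "y powr (real d / 2) * (y * z / 2) powr (real d / 2 - 1) = y ^ (d - 1) * (z / 2) powr (real d / 2 - 1)"
  proof -
    have "(y * z / 2) powr (real d / 2 - 1) = y powr (real d / 2 - 1) * (z / 2) powr (real d / 2 - 1)"
      using y z by (simp add: powr_mult[symmetric])
    moreover have "y powr (real d / 2) * y powr (real d / 2 - 1) = y powr (real (d - 1))"
      using d by (simp add: powr_add[symmetric] of_nat_diff)
    moreover have "y powr (real (d - 1)) = y ^ (d - 1)" using y by (rule powr_realpow)
    ultimately show ?thesis by (simp add: mult.assoc[symmetric])
  qed
  define Q where "Q = Kw * ph * y ^ (d - 1) * (z / 2) powr (real d / 2 - 1) * rGamma (real d / 2)"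
  have "wendland \<mu> \<alpha> \<epsilon> y * y powr (real d / 2) * besselJ (real d / 2 - 1) (y * z)
      = Q * (\<Sum>k. (- ((y * z)\<^sup>2 / 4)) ^ k / (pochhammer (real d / 2) k * fact k))"
    unfolding W J Q_def using pw by (simp add: mult_ac)
  also have "\<dots> = (\<Sum>k. Q * ((- ((y * z)\<^sup>2 / 4)) ^ k / (pochhammer (real d / 2) k * fact k)))"
    by (rule suminf_mult[OF s, symmetric])
  also have "\<dots> = (\<Sum>k. ck k * (enn2real (wendland_nn \<mu> \<alpha> \<epsilon> y) * y ^ (d - 1 + 2 * k)))"
  proof (rule suminf_cong)
    fix k
    have "(- ((y * z)\<^sup>2 / 4)) ^ k = (- (z\<^sup>2 / 4)) ^ k * y ^ (2 * k)"
    proof -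
      have h: "- ((y * z)\<^sup>2 / 4) = (- (z\<^sup>2 / 4)) * y\<^sup>2" by (simp add: power_mult_distrib)
      have "y ^ (2 * k) = (y\<^sup>2) ^ k" by (simp add: power_mult)
      then show ?thesis by (subst h) (simp only: power_mult_distrib)
    qed
    moreover have "(enn2real (wendland_nn \<mu> \<alpha> \<epsilon> y) * y ^ (d - 1 + 2 * k)) = ph * y ^ (d - 1) * y ^ (2 * k)"
      unfolding ph_def by (simp add: power_add)
    ultimately show "Q * ((- ((y * z)\<^sup>2 / 4)) ^ k / (pochhammer (real d / 2) k * fact k)) = ck k * (enn2real (wendland_nn \<mu> \<alpha> \<epsilon> y) * y ^ (d - 1 + 2 * k))"
      unfolding Q_def ck_def Kw_def by (simp add: field_simps)
  qed
  finally show ?thesis .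
qed

lemma
  fixes d :: nat and \<epsilon> \<mu> \<alpha> z :: real
  assumes d: "d \<ge> 1" and e: "\<epsilon> > 0" and mu: "\<mu> > -1" and a: "\<alpha> > 0" and z: "z > 0"
  defines "ck \<equiv> \<lambda>k. 1 / (2 powr (\<alpha> - 1) * Gamma \<alpha>) * (z / 2) powr (real d / 2 - 1) * rGamma (real d / 2)
    * ((- (z\<^sup>2 / 4)) ^ k / (pochhammer (real d / 2) k * fact k))"
  assumes moments: "summable (\<lambda>k. \<bar>ck k\<bar> * wendland_nn_moment \<mu> \<alpha> \<epsilon> (d - 1 + 2 * k))"
  shows has_integral_wendland_besselJ:
      "((\<lambda>y. wendland \<mu> \<alpha> \<epsilon> y * y powr (real d / 2) * besselJ (real d / 2 - 1) (y * z))
          has_integral (\<Sum>k. ck k * wendland_nn_moment \<mu> \<alpha> \<epsilon> (d - 1 + 2 * k))) {0..}"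
    and summable_wendland_besselJ_moments:
      "summable (\<lambda>k. ck k * wendland_nn_moment \<mu> \<alpha> \<epsilon> (d - 1 + 2 * k))"
proof -
  have entire: "summable (\<lambda>k. \<bar>ck k * x ^ k\<bar>)" for x
  proof -
    have "\<bar>ck k * x ^ k\<bar> = \<bar>ck 0\<bar> * \<bar>(- (z\<^sup>2 * x / 4)) ^ k / (pochhammer (real d / 2 - 1 + 1) k * fact k)\<bar>" for k
    proof -
      have "(- (z\<^sup>2 / 4)) ^ k * x ^ k = (- (z\<^sup>2 * x / 4)) ^ k"
        by (simp flip: power_mult_distrib)
      then show ?thesis
        unfolding ck_def by (simp add: abs_mult field_simps)
    qed
    moreover have "real d / 2 - 1 > -1" using d by simp
    ultimately show ?thesis
      by (simp only:) (rule summable_mult[OF summable_abs_bessel_series])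
  qed
  show "summable (\<lambda>k. ck k * wendland_nn_moment \<mu> \<alpha> \<epsilon> (d - 1 + 2 * k))"
    using summable_wendland_nn_moment_series[OF e a mu entire] moments by simp
  obtain S where S: "negligible S" "\<And>y. \<not> wendland_nn \<mu> \<alpha> \<epsilon> y \<noteq> \<infinity> \<Longrightarrow> y \<in> S"
    by (rule AE_lborel_negligible_exception[OF AE_wendland_nn_finite[OF e a mu]]) auto
  show "((\<lambda>y. wendland \<mu> \<alpha> \<epsilon> y * y powr (real d / 2) * besselJ (real d / 2 - 1) (y * z))
      has_integral (\<Sum>k. ck k * wendland_nn_moment \<mu> \<alpha> \<epsilon> (d - 1 + 2 * k))) {0..}"
  proof (rule has_integral_spike[OF _ _ has_integral_wendland_nn_power_series[OF e a mu entire]])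
    show "negligible (insert 0 S)" using S(1) by simp
    fix y assume "y \<in> {0..} - insert 0 S"
    then have "y > 0" "wendland_nn \<mu> \<alpha> \<epsilon> y \<noteq> \<infinity>" using S(2) by force+
    then show "wendland \<mu> \<alpha> \<epsilon> y * y powr (real d / 2) * besselJ (real d / 2 - 1) (y * z)
        = (\<Sum>k. ck k * (enn2real (wendland_nn \<mu> \<alpha> \<epsilon> y) * y ^ (d - 1 + 2 * k)))"
      unfolding ck_def by (rule wendland_besselJ_series[OF d e z])
  qed (use moments in simp)
qed

lemma radial_FT_wendland_eq_hypergeom:
  fixes d :: nat and \<epsilon> \<mu> \<alpha> z :: real
  assumes d: "d \<ge> 1" and e: "\<epsilon> > 0" and mu: "\<mu> > -1" and a: "\<alpha> > 0" and z: "z > 0"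
  defines "lam \<equiv> (real d + 1) / 2 + \<alpha>"
  shows "radial_FT d (wendland \<mu> \<alpha> \<epsilon>) z
    = 2 powr lam * Gamma lam * Gamma (\<mu> + 1) / Gamma (2 * lam + \<mu>) / (sqrt (2 * pi) * \<epsilon> ^ d)
      * hypergeom [lam] [lam + \<mu> / 2, lam + (\<mu> + 1) / 2] (- (z\<^sup>2 / (4 * \<epsilon>\<^sup>2)))"
proof -
  define ck where "ck k = 1 / (2 powr (\<alpha> - 1) * Gamma \<alpha>) * (z / 2) powr (real d / 2 - 1) * rGamma (real d / 2)
    * ((- (z\<^sup>2 / 4)) ^ k / (pochhammer (real d / 2) k * fact k))" for k
  define Ch where "Ch = 2 powr lam * Gamma lam * Gamma (\<mu> + 1) / Gamma (2 * lam + \<mu>) / (sqrt (2 * pi) * \<epsilon> ^ d)"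
  define T where "T k = hypergeom12_coeff lam (lam + \<mu> / 2) (lam + (\<mu> + 1) / 2) k * (- (z\<^sup>2 / (4 * \<epsilon>\<^sup>2))) ^ k" for k
  define M where "M k = wendland_nn_moment \<mu> \<alpha> \<epsilon> (d - 1 + 2 * k)" for k
  have coeff: "z powr (1 - real d / 2) * ck k * M k = Ch * T k" for k
  proof -
    have "(- (z\<^sup>2 / (4 * \<epsilon>\<^sup>2))) ^ k = (- (1 / (4 * \<epsilon>\<^sup>2))) ^ k * (z\<^sup>2) ^ k"
      by (simp flip: power_mult_distrib)
    then show ?thesis
      using wendland_FT_coeff[OF d e mu a z, of k]
      unfolding ck_def Ch_def T_def M_def lam_def by (simp add: mult.assoc)
  qed
  have zp: "z powr (1 - real d / 2) > 0" using z by simp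
  have sT: "summable (\<lambda>k. \<bar>T k\<bar>)"
  proof -
    have "real d \<ge> 1" using d by simp
    then show ?thesis
      unfolding T_def using a mu by (intro summable_abs_hypergeom12) (simp_all add: lam_def field_simps)
  qed
  have "\<bar>ck k\<bar> * M k = \<bar>Ch\<bar> / z powr (1 - real d / 2) * \<bar>T k\<bar>" for k
  proof -
    have "M k > 0" unfolding M_def by (rule wendland_nn_moment_pos[OF e a mu])
    then have "\<bar>Ch * T k\<bar> = z powr (1 - real d / 2) * (\<bar>ck k\<bar> * M k)"
      unfolding coeff[symmetric] using zp by (simp add: abs_mult)
    then show ?thesis using zp by (simp add: abs_mult field_simps)
  qed
  then have moments: "summable (\<lambda>k. \<bar>ck k\<bar> * M k)"
    by (simp only:) (rule summable_mult[OF sT])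
  have I: "((\<lambda>y. wendland \<mu> \<alpha> \<epsilon> y * y powr (real d / 2) * besselJ (real d / 2 - 1) (y * z))
      has_integral (\<Sum>k. ck k * M k)) {0..}"
    unfolding ck_def M_def by (rule has_integral_wendland_besselJ[OF d e mu a z moments[unfolded ck_def M_def]])
  have "summable (\<lambda>k. ck k * M k)"
    unfolding ck_def M_def by (rule summable_wendland_besselJ_moments[OF d e mu a z moments[unfolded ck_def M_def]])
  then have "radial_FT d (wendland \<mu> \<alpha> \<epsilon>) z = (\<Sum>k. z powr (1 - real d / 2) * ck k * M k)"
    unfolding radial_FT_def integral_unique[OF I] by (simp add: suminf_mult mult.assoc)
  also have "\<dots> = Ch * hypergeom [lam] [lam + \<mu> / 2, lam + (\<mu> + 1) / 2] (- (z\<^sup>2 / (4 * \<epsilon>\<^sup>2)))"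
    unfolding coeff hypergeom_1F2 T_def by (rule suminf_mult[OF summable_rabs_cancel[OF sT[unfolded T_def]]])
  finally show ?thesis unfolding Ch_def .
qed

section \<open>Termwise integration over \<open>[0, r]\<close>\<close>

lemma summable_abs_hypergeom12_scaled:
  assumes "b > 0" "c > 0"
  shows "summable (\<lambda>j. \<bar>hypergeom12_coeff a b c j * w ^ j * x ^ j\<bar>)"
  using summable_abs_hypergeom12[OF assms, of a "w * x"] by (simp add: power_mult_distrib mult.assoc)

lemma
  fixes p r :: real
  assumes p: "p > -1" and r: "r \<ge> 0"
  shows integrable_indicator_powr: "integrable lborel (\<lambda>z. indicator {0..r} z * z powr p)"
    and integral_indicator_powr: "(\<integral>z. indicator {0..r} z * z powr p \<partial>lborel) = r powr (p + 1) / (p + 1)"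
proof -
  have "((\<lambda>z. z powr p) has_integral (r powr (p + 1) / (p + 1))) {0..r}"
    by (rule has_integral_powr_from_0[OF p r])
  then have "(\<integral>\<^sup>+z. ennreal (z powr p) * indicator {0..r} z \<partial>lborel) = ennreal (r powr (p + 1) / (p + 1))"
    by (rule nn_integral_has_integral_lebesgue'[rotated]) simp
  moreover have "(\<integral>\<^sup>+z. ennreal (z powr p) * indicator {0..r} z \<partial>lborel)
      = (\<integral>\<^sup>+z. ennreal (indicator {0..r} z * z powr p) \<partial>lborel)"
    by (intro nn_integral_cong) (simp split: split_indicator)
  ultimately have "(\<integral>\<^sup>+z. ennreal (indicator {0..r} z * z powr p) \<partial>lborel) = ennreal (r powr (p + 1) / (p + 1))"
    by simp
  then have "integrable lborel (\<lambda>z. indicator {0..r} z * z powr p) \<and>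
      (\<integral>z. indicator {0..r} z * z powr p \<partial>lborel) = r powr (p + 1) / (p + 1)"
    using p by (subst nn_integral_eq_integrable[symmetric]) (auto simp: indicator_def)
  then show "integrable lborel (\<lambda>z. indicator {0..r} z * z powr p)"
    "(\<integral>z. indicator {0..r} z * z powr p \<partial>lborel) = r powr (p + 1) / (p + 1)"
    by auto
qed

lemma powr_add_twice_nat:
  fixes z a :: real
  assumes "z \<ge> 0"
  shows "z powr (a + 2 * real n) = z powr a * (z\<^sup>2) ^ n"
proof (cases "z = 0")
  case False
  with assms have z: "z > 0" by simp
  have "z powr (2 * real n) = z powr real (2 * n)" by simp
  also have "\<dots> = z ^ (2 * n)" by (rule powr_realpow[OF z])
  also have "\<dots> = (z\<^sup>2) ^ n" by (simp add: power_mult)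
  finally show ?thesis by (simp add: powr_add)
qed simp

lemma
  fixes b :: "nat \<Rightarrow> real" and q r :: real
  assumes q: "q > -1" and r: "r > 0" and entire: "\<And>x. summable (\<lambda>n. \<bar>b n * x ^ n\<bar>)"
  shows integrable_indicator_powr_power_series:
      "integrable lborel (\<lambda>z. indicator {0..r} z * z powr q * (\<Sum>n. b n * (z\<^sup>2) ^ n))"
    and integral_indicator_powr_power_series:
      "(\<integral>z. indicator {0..r} z * z powr q * (\<Sum>n. b n * (z\<^sup>2) ^ n) \<partial>lborel)
         = (\<Sum>n. b n * (r powr (q + 2 * real n + 1) / (q + 2 * real n + 1)))"
    and summable_indicator_powr_power_series:
      "summable (\<lambda>n. b n * (r powr (q + 2 * real n + 1) / (q + 2 * real n + 1)))"
proof -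
  define \<phi> where "\<phi> = (\<lambda>n z. b n * (indicator {0..r} z * z powr (q + 2 * real n)))"
  have qn: "q + 2 * real n > -1" for n using q by simp
  have int: "integrable lborel (\<phi> n)" for n
    unfolding \<phi>_def using integrable_indicator_powr[OF qn] r by simp
  have intv: "integral\<^sup>L lborel (\<phi> n) = b n * (r powr (q + 2 * real n + 1) / (q + 2 * real n + 1))" for n
    unfolding \<phi>_def using integral_indicator_powr[OF qn, of r] r by simp
  have norm_\<phi>: "norm (\<phi> n z) = \<bar>b n\<bar> * (indicator {0..r} z * z powr (q + 2 * real n))" for n z
    unfolding \<phi>_def by (simp add: abs_mult indicator_def)
  have sabs: "summable (\<lambda>n. \<integral>z. norm (\<phi> n z) \<partial>lborel)"
  proof (rule summable_comparison_test')
    show "summable (\<lambda>n. \<bar>b n * (r\<^sup>2) ^ n\<bar> * (r powr (q + 1) / (q + 1)))"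
      by (intro summable_mult2 entire)
    fix n
    have "r powr (q + 2 * real n + 1) = r powr (q + 1) * (r\<^sup>2) ^ n"
      using powr_add_twice_nat[of r "q + 1" n] r by (simp add: add_ac)
    then have "r powr (q + 2 * real n + 1) / (q + 2 * real n + 1) \<le> r powr (q + 1) * (r\<^sup>2) ^ n / (q + 1)"
      using q r by (intro frac_le) auto
    then have "\<bar>b n\<bar> * (r powr (q + 2 * real n + 1) / (q + 2 * real n + 1))
        \<le> \<bar>b n\<bar> * (r powr (q + 1) * (r\<^sup>2) ^ n / (q + 1))"
      by (rule mult_left_mono) simp
    also have "\<dots> = \<bar>b n * (r\<^sup>2) ^ n\<bar> * (r powr (q + 1) / (q + 1))"
      by (simp add: abs_mult)
    finally have "\<bar>b n\<bar> * (r powr (q + 2 * real n + 1) / (q + 2 * real n + 1))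
        \<le> \<bar>b n * (r\<^sup>2) ^ n\<bar> * (r powr (q + 1) / (q + 1))" .
    moreover have "(\<integral>z. norm (\<phi> n z) \<partial>lborel) = \<bar>b n\<bar> * (r powr (q + 2 * real n + 1) / (q + 2 * real n + 1))"
      unfolding norm_\<phi> using integral_indicator_powr[OF qn, of r] r by simp
    moreover have "q + 2 * real n + 1 > 0" using q by simp
    ultimately show "norm (\<integral>z. norm (\<phi> n z) \<partial>lborel) \<le> \<bar>b n * (r\<^sup>2) ^ n\<bar> * (r powr (q + 1) / (q + 1))"
      by simp
  qed
  have \<phi>_eq: "\<phi> n z = indicator {0..r} z * z powr q * (b n * (z\<^sup>2) ^ n)" for n z
    unfolding \<phi>_def by (cases "z \<in> {0..r}") (simp_all add: powr_add_twice_nat)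
  have AEs: "AE z in lborel. summable (\<lambda>n. norm (\<phi> n z))"
    unfolding \<phi>_eq real_norm_def abs_mult[of "indicator {0..r} _ * _ powr q"]
    by (intro AE_I2) (rule summable_mult[OF entire])
  have sum_\<phi>: "(\<lambda>z. \<Sum>n. \<phi> n z) = (\<lambda>z. indicator {0..r} z * z powr q * (\<Sum>n. b n * (z\<^sup>2) ^ n))"
    unfolding \<phi>_eq by (rule ext, rule suminf_mult[OF summable_rabs_cancel[OF entire]])
  show "integrable lborel (\<lambda>z. indicator {0..r} z * z powr q * (\<Sum>n. b n * (z\<^sup>2) ^ n))"
    using integrable_suminf[OF int AEs sabs] unfolding sum_\<phi> .
  show "(\<integral>z. indicator {0..r} z * z powr q * (\<Sum>n. b n * (z\<^sup>2) ^ n) \<partial>lborel)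
      = (\<Sum>n. b n * (r powr (q + 2 * real n + 1) / (q + 2 * real n + 1)))"
    using integral_suminf[OF int AEs sabs] unfolding sum_\<phi> intv .
  show "summable (\<lambda>n. b n * (r powr (q + 2 * real n + 1) / (q + 2 * real n + 1)))"
    using summable_integral[OF int AEs sabs] unfolding intv .
qed

lemma
  fixes a b :: "nat \<Rightarrow> real" and q r :: real
  assumes q: "q > -1" and r: "r > 0"
    and entire_a: "\<And>x. summable (\<lambda>l. \<bar>a l * x ^ l\<bar>)"
    and entire_b: "\<And>x. summable (\<lambda>n. \<bar>b n * x ^ n\<bar>)"
  defines "V \<equiv> \<lambda>l. \<Sum>n. b n * (r powr (q + 2 * real l + 2 * real n + 1) / (q + 2 * real l + 2 * real n + 1))"
  shows has_integral_powr_power_series_product: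
      "((\<lambda>z. z powr q * (\<Sum>n. b n * (z\<^sup>2) ^ n) * (\<Sum>l. a l * (z\<^sup>2) ^ l)) has_integral (\<Sum>l. a l * V l)) {0..r}"
    and summable_powr_power_series_product: "summable (\<lambda>l. a l * V l)"
proof -
  define B where "B = (\<lambda>z. \<Sum>n. b n * (z\<^sup>2) ^ n)"
  define \<Phi> where "\<Phi> = (\<lambda>(l::nat) z. indicator {0..r} z * z powr (q + 2 * real l) * B z)"
  define \<psi> where "\<psi> = (\<lambda>l z. a l * \<Phi> l z)"
  have ql: "q + 2 * real l > -1" for l using q by simp
  have \<Phi>_eq: "\<Phi> l z = indicator {0..r} z * z powr q * B z * (z\<^sup>2) ^ l" for l z
    unfolding \<Phi>_def by (cases "z \<in> {0..r}") (simp_all add: powr_add_twice_nat)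
  have int: "integrable lborel (\<psi> l)" for l
    unfolding \<psi>_def \<Phi>_def B_def
    by (intro integrable_mult_right integrable_indicator_powr_power_series[OF ql r entire_b])
  have intv: "integral\<^sup>L lborel (\<psi> l) = a l * V l" for l
    unfolding \<psi>_def \<Phi>_def B_def V_def
    by (simp add: integral_indicator_powr_power_series[OF ql r entire_b] add_ac)
  have AEs: "AE z in lborel. summable (\<lambda>l. norm (\<psi> l z))"
  proof (intro AE_I2)
    fix z
    have "norm (\<psi> l z) = \<bar>indicator {0..r} z * z powr q * B z\<bar> * \<bar>a l * (z\<^sup>2) ^ l\<bar>" for l
      unfolding \<psi>_def \<Phi>_eq by (simp add: abs_mult)
    then show "summable (\<lambda>l. norm (\<psi> l z))"
      by (simp only:) (rule summable_mult[OF entire_a])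
  qed
  have \<Phi>0: "\<Phi> 0 = (\<lambda>z. indicator {0..r} z * z powr q * B z)"
    unfolding \<Phi>_def by simp
  have \<Phi>0_abs: "integrable lborel (\<lambda>z. \<bar>\<Phi> 0 z\<bar>)"
    unfolding \<Phi>0 B_def by (intro integrable_abs integrable_indicator_powr_power_series[OF q r entire_b])
  have bound: "norm (\<psi> l z) \<le> \<bar>a l * (r\<^sup>2) ^ l\<bar> * \<bar>\<Phi> 0 z\<bar>" for l z
  proof (cases "z \<in> {0..r}")
    case True
    then have "(z\<^sup>2) ^ l \<le> (r\<^sup>2) ^ l" by (intro power_mono) (auto intro: power_mono)
    then have "\<bar>a l\<bar> * (z\<^sup>2) ^ l * \<bar>\<Phi> 0 z\<bar> \<le> \<bar>a l\<bar> * (r\<^sup>2) ^ l * \<bar>\<Phi> 0 z\<bar>"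
      by (intro mult_right_mono mult_left_mono) auto
    then show ?thesis
      unfolding \<psi>_def \<Phi>_eq \<Phi>0 using True by (simp add: abs_mult mult_ac)
  qed (simp add: \<psi>_def \<Phi>_def)
  have sabs: "summable (\<lambda>l. \<integral>z. norm (\<psi> l z) \<partial>lborel)"
  proof (rule summable_comparison_test')
    show "summable (\<lambda>l. \<bar>a l * (r\<^sup>2) ^ l\<bar> * (\<integral>z. \<bar>\<Phi> 0 z\<bar> \<partial>lborel))"
      by (intro summable_mult2 entire_a)
    fix l
    have "(\<integral>z. norm (\<psi> l z) \<partial>lborel) \<le> (\<integral>z. \<bar>a l * (r\<^sup>2) ^ l\<bar> * \<bar>\<Phi> 0 z\<bar> \<partial>lborel)"
      by (intro integral_mono integrable_norm int integrable_mult_right \<Phi>0_abs bound)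
    then show "norm (\<integral>z. norm (\<psi> l z) \<partial>lborel) \<le> \<bar>a l * (r\<^sup>2) ^ l\<bar> * (\<integral>z. \<bar>\<Phi> 0 z\<bar> \<partial>lborel)"
      by simp
  qed
  have "((\<lambda>z. \<Sum>l. \<psi> l z) has_integral (\<Sum>l. a l * V l)) UNIV"
    using has_integral_integral_lborel[OF integrable_suminf[OF int AEs sabs]]
    unfolding integral_suminf[OF int AEs sabs] intv .
  moreover have "(\<lambda>z. \<Sum>l. \<psi> l z)
      = (\<lambda>z. if z \<in> {0..r} then z powr q * (\<Sum>n. b n * (z\<^sup>2) ^ n) * (\<Sum>l. a l * (z\<^sup>2) ^ l) else 0)"
  proof
    fix z
    have "(\<Sum>l. \<psi> l z) = (indicator {0..r} z * z powr q * B z) * (\<Sum>l. a l * (z\<^sup>2) ^ l)"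
      unfolding \<psi>_def \<Phi>_eq
      by (simp only: mult.left_commute[of "a _"] suminf_mult[OF summable_rabs_cancel[OF entire_a]])
    then show "(\<Sum>l. \<psi> l z)
        = (if z \<in> {0..r} then z powr q * (\<Sum>n. b n * (z\<^sup>2) ^ n) * (\<Sum>l. a l * (z\<^sup>2) ^ l) else 0)"
      unfolding B_def by simp
  qed
  ultimately have "((\<lambda>z. if z \<in> {0..r} then z powr q * (\<Sum>n. b n * (z\<^sup>2) ^ n) * (\<Sum>l. a l * (z\<^sup>2) ^ l) else 0)
      has_integral (\<Sum>l. a l * V l)) UNIV"
    by (simp only:)
  then show "((\<lambda>z. z powr q * (\<Sum>n. b n * (z\<^sup>2) ^ n) * (\<Sum>l. a l * (z\<^sup>2) ^ l))
      has_integral (\<Sum>l. a l * V l)) {0..r}"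
    unfolding has_integral_restrict_UNIV .
  show "summable (\<lambda>l. a l * V l)"
    using summable_integral[OF int AEs sabs] unfolding intv .
qed

section \<open>Regrouping the double series\<close>

lemma pochhammer_times_shift:
  fixes a :: real
  shows "pochhammer a l * (a + real l) = a * pochhammer (a + 1) l"
  using pochhammer_rec[of a l] pochhammer_rec'[of a l] by (simp add: mult.commute)

lemma bessel_wendland_term_eq:
  fixes \<gamma> r \<epsilon> lam \<mu> :: real and l n :: nat
  assumes g: "\<gamma> > -1/2" and r: "r > 0" and e: "\<epsilon> > 0" and l: "lam > 1/2" and mu: "\<mu> > -1"
  shows "hypergeom12_coeff lam (lam + \<mu> / 2) (lam + (\<mu> + 1) / 2) l * (- (1 / (4 * \<epsilon>\<^sup>2))) ^ l
      * (hypergeom12_coeff (\<gamma> + 1/2) (\<gamma> + 1) (2 * \<gamma> + 1) n * (-1) ^ n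
         * (r powr (2 * \<gamma> + 1 + 2 * real l + 2 * real n + 1) / (2 * \<gamma> + 1 + 2 * real l + 2 * real n + 1)))
    = (r powr (2 * (\<gamma> + 1)) / (2 * (\<gamma> + 1))) *
      (pochhammer (\<gamma> + 1) l * pochhammer lam l * (- (r\<^sup>2 / (4 * \<epsilon>\<^sup>2))) ^ l
        / (pochhammer (\<gamma> + 2) l * pochhammer (lam + \<mu> / 2) l * pochhammer (lam + (\<mu> + 1) / 2) l * fact l)) *
      (pochhammer (\<gamma> + 1 + real l) n * pochhammer (\<gamma> + 1 / 2) n
        / (pochhammer (\<gamma> + 2 + real l) n * pochhammer (\<gamma> + 1) n * pochhammer (2 * \<gamma> + 1) n) * (- (r\<^sup>2)) ^ n / fact n)"
proof -
  have l1: "lam + \<mu> / 2 > 0" "lam + (\<mu> + 1) / 2 > 0" "lam > 0" using l mu by (simp_all add: field_simps)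
  have pos: "pochhammer (\<gamma> + 1) l > 0" "pochhammer (\<gamma> + 2) l > 0" "pochhammer (\<gamma> + 1 + real l) n > 0"
    "pochhammer (\<gamma> + 2 + real l) n > 0" "pochhammer (\<gamma> + 1) n > 0" "pochhammer (2 * \<gamma> + 1) n > 0"
    "pochhammer (\<gamma> + 1 / 2) n > 0" "pochhammer lam l > 0"
    "pochhammer (lam + \<mu> / 2) l > 0" "pochhammer (lam + (\<mu> + 1) / 2) l > 0"
    using g l1 by (auto intro!: pochhammer_pos)
  have R1: "pochhammer (\<gamma> + 1) l * (\<gamma> + 1 + real l) = (\<gamma> + 1) * pochhammer (\<gamma> + 2) l"
    using pochhammer_times_shift[of "\<gamma> + 1" l] by (simp add: add.assoc)
  have R2: "pochhammer (\<gamma> + 1 + real l) n * (\<gamma> + 1 + real l + real n) = (\<gamma> + 1 + real l) * pochhammer (\<gamma> + 2 + real l) n"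
    using pochhammer_times_shift[of "\<gamma> + 1 + real l" n] by (simp add: algebra_simps)
  have P: "r powr (2 * \<gamma> + 1 + 2 * real l + 2 * real n + 1) = r powr (2 * (\<gamma> + 1)) * (r\<^sup>2) ^ l * (r\<^sup>2) ^ n"
  proof -
    have "2 * \<gamma> + 1 + 2 * real l + 2 * real n + 1 = 2 * (\<gamma> + 1) + 2 * real l + 2 * real n" by simp
    then show ?thesis using r by (simp only: powr_add_twice_nat less_imp_le)
  qed
  have pow_l: "(- (r\<^sup>2 / (4 * \<epsilon>\<^sup>2))) ^ l = (- (1 / (4 * \<epsilon>\<^sup>2))) ^ l * (r\<^sup>2) ^ l"
  proof -
    have h: "- (r\<^sup>2 / (4 * \<epsilon>\<^sup>2)) = (- (1 / (4 * \<epsilon>\<^sup>2))) * r\<^sup>2" by simp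
    show ?thesis by (subst h) (rule power_mult_distrib)
  qed
  have pow_n: "(- (r\<^sup>2)) ^ n = (-1) ^ n * (r\<^sup>2) ^ n" by (rule power_minus)
  define A where "A = pochhammer (\<gamma> + 1 + real l) n"
  define B where "B = pochhammer (\<gamma> + 2 + real l) n"
  define E where "E = pochhammer (\<gamma> + 1) l"
  define F where "F = pochhammer (\<gamma> + 2) l"
  define Pl where "Pl = pochhammer lam l"
  define Q1 where "Q1 = pochhammer (lam + \<mu> / 2) l"
  define Q2 where "Q2 = pochhammer (lam + (\<mu> + 1) / 2) l"
  define Ph where "Ph = pochhammer (\<gamma> + 1 / 2) n"
  define Pg where "Pg = pochhammer (\<gamma> + 1) n"
  define Pt where "Pt = pochhammer (2 * \<gamma> + 1) n"
  define fl where "fl = (fact l :: real)"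
  define fn where "fn = (fact n :: real)"
  define R where "R = r powr (2 * (\<gamma> + 1))"
  define q where "q = - (1 / (4 * \<epsilon>\<^sup>2))"
  define s where "s = r\<^sup>2"
  define u where "u = \<gamma> + 1 + real l"
  define v where "v = \<gamma> + 1 + real l + real n"
  have nz: "A > 0" "B > 0" "E > 0" "F > 0" "Pl > 0" "Q1 > 0" "Q2 > 0" "Ph > 0" "Pg > 0" "Pt > 0" "fl > 0" "fn > 0"
    "u > 0" "v > 0" "\<gamma> + 1 > 0"
    using pos g unfolding A_def B_def E_def F_def Pl_def Q1_def Q2_def Ph_def Pg_def Pt_def fl_def fn_def u_def v_def
    by auto
  have EE: "E = F * (\<gamma> + 1) / u"
    using R1 nz unfolding E_def F_def u_def by (simp add: field_simps)
  have AA: "A = B * u / v"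
    using R2 nz unfolding A_def B_def u_def v_def by (simp add: field_simps)
  define g1 where "g1 = \<gamma> + 1"
  have g1: "g1 > 0" using g by (simp add: g1_def)
  have goal0: "Pl / (Q1 * Q2 * fl) * q ^ l * (Ph / (Pg * Pt * fn) * (-1) ^ n * (R * s ^ l * s ^ n / (2 * v)))
    = (R / (2 * g1)) * (F * g1 / u * Pl * (q ^ l * s ^ l) / (F * Q1 * Q2 * fl)) *
      (B * u / v * Ph / (B * Pg * Pt) * ((-1) ^ n * s ^ n) / fn)"
    using nz g1 by (simp add: field_simps)
  have goal: "Pl / (Q1 * Q2 * fl) * q ^ l * (Ph / (Pg * Pt * fn) * (-1) ^ n * (R * s ^ l * s ^ n / (2 * v)))
    = (R / (2 * (\<gamma> + 1))) * (E * Pl * (q ^ l * s ^ l) / (F * Q1 * Q2 * fl)) *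
      (A * Ph / (B * Pg * Pt) * ((-1) ^ n * s ^ n) / fn)"
    using goal0 unfolding EE AA g1_def .
  show ?thesis
    unfolding hypergeom12_coeff_def P pow_l pow_n
    using goal unfolding A_def B_def E_def F_def Pl_def Q1_def Q2_def Ph_def Pg_def Pt_def fl_def fn_def R_def q_def s_def u_def v_def
    by (simp add: add_ac)
qed

lemma sum_bessel_wendland_regroup:
  fixes \<gamma> r \<epsilon> lam \<mu> :: real
  assumes g: "\<gamma> > -1/2" and r: "r > 0" and e: "\<epsilon> > 0" and l: "lam > 1/2" and mu: "\<mu> > -1"
  defines "a \<equiv> \<lambda>l. hypergeom12_coeff lam (lam + \<mu> / 2) (lam + (\<mu> + 1) / 2) l * (- (1 / (4 * \<epsilon>\<^sup>2))) ^ l"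
    and "V \<equiv> \<lambda>l. \<Sum>n. hypergeom12_coeff (\<gamma> + 1/2) (\<gamma> + 1) (2 * \<gamma> + 1) n * (-1) ^ n
            * (r powr (2 * \<gamma> + 1 + 2 * real l + 2 * real n + 1) / (2 * \<gamma> + 1 + 2 * real l + 2 * real n + 1))"
  assumes outer_summable: "summable (\<lambda>l. a l * V l)"
  shows "(\<Sum>l. a l * V l) = r powr (2 * (\<gamma> + 1)) / (2 * (\<gamma> + 1)) *
    (\<Sum>l. pochhammer (\<gamma> + 1) l * pochhammer lam l * (- (r\<^sup>2 / (4 * \<epsilon>\<^sup>2))) ^ l
           / (pochhammer (\<gamma> + 2) l * pochhammer (lam + \<mu> / 2) l * pochhammer (lam + (\<mu> + 1) / 2) l * fact l)
         * hypergeom [\<gamma> + 1 + real l, \<gamma> + 1 / 2] [\<gamma> + 2 + real l, \<gamma> + 1, 2 * \<gamma> + 1] (- (r\<^sup>2)))"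
proof -
  define c where "c = r powr (2 * (\<gamma> + 1)) / (2 * (\<gamma> + 1))"
  define T where "T = (\<lambda>l. pochhammer (\<gamma> + 1) l * pochhammer lam l * (- (r\<^sup>2 / (4 * \<epsilon>\<^sup>2))) ^ l
    / (pochhammer (\<gamma> + 2) l * pochhammer (lam + \<mu> / 2) l * pochhammer (lam + (\<mu> + 1) / 2) l * fact l))"
  define h where "h = (\<lambda>(l::nat) n. pochhammer (\<gamma> + 1 + real l) n * pochhammer (\<gamma> + 1 / 2) n
    / (pochhammer (\<gamma> + 2 + real l) n * pochhammer (\<gamma> + 1) n * pochhammer (2 * \<gamma> + 1) n) * (- (r\<^sup>2)) ^ n / fact n)"
  have c0: "c \<noteq> 0" using r g by (simp add: c_def)
  have T0: "T l \<noteq> 0" for l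
  proof -
    have "lam + \<mu> / 2 > 0" "lam + (\<mu> + 1) / 2 > 0" "lam > 0" using l mu by (simp_all add: field_simps)
    then have "pochhammer (\<gamma> + 1) l > 0" "pochhammer lam l > 0" "pochhammer (\<gamma> + 2) l > 0"
      "pochhammer (lam + \<mu> / 2) l > 0" "pochhammer (lam + (\<mu> + 1) / 2) l > 0"
      using g by (auto intro!: pochhammer_pos)
    moreover have "(- (r\<^sup>2 / (4 * \<epsilon>\<^sup>2))) ^ l \<noteq> 0" using r e by simp
    ultimately show ?thesis unfolding T_def by simp
  qed
  have inner: "a l * V l = c * (T l * hypergeom [\<gamma> + 1 + real l, \<gamma> + 1 / 2] [\<gamma> + 2 + real l, \<gamma> + 1, 2 * \<gamma> + 1] (- (r\<^sup>2)))" for l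
  proof -
    have terms: "a l * (hypergeom12_coeff (\<gamma> + 1/2) (\<gamma> + 1) (2 * \<gamma> + 1) n * (-1) ^ n
        * (r powr (2 * \<gamma> + 1 + 2 * real l + 2 * real n + 1) / (2 * \<gamma> + 1 + 2 * real l + 2 * real n + 1)))
        = (c * T l) * h l n" for n
      unfolding a_def c_def T_def h_def using bessel_wendland_term_eq[OF g r e l mu] by (simp add: mult.assoc)
    have inner_summable: "summable (\<lambda>n. hypergeom12_coeff (\<gamma> + 1/2) (\<gamma> + 1) (2 * \<gamma> + 1) n * (-1) ^ n
        * (r powr (2 * \<gamma> + 1 + 2 * real l + 2 * real n + 1) / (2 * \<gamma> + 1 + 2 * real l + 2 * real n + 1)))"
      using g r by (intro summable_indicator_powr_power_series summable_abs_hypergeom12_scaled) auto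
    have "a l * V l = (\<Sum>n. (c * T l) * h l n)"
      unfolding V_def terms[symmetric] using suminf_mult[OF inner_summable, of "a l"] by simp
    moreover have "summable (h l)"
      using summable_mult[OF inner_summable, of "a l"] c0 T0[of l] unfolding terms by (simp add: summable_cmult_iff)
    moreover have "hypergeom [\<gamma> + 1 + real l, \<gamma> + 1 / 2] [\<gamma> + 2 + real l, \<gamma> + 1, 2 * \<gamma> + 1] (- (r\<^sup>2))
        = (\<Sum>n. h l n)"
      unfolding hypergeom_def h_def by (simp add: mult.assoc)
    ultimately show ?thesis
      by (simp add: suminf_mult mult.assoc)
  qed
  have "summable (\<lambda>l. T l * hypergeom [\<gamma> + 1 + real l, \<gamma> + 1 / 2] [\<gamma> + 2 + real l, \<gamma> + 1, 2 * \<gamma> + 1] (- (r\<^sup>2)))"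
    using outer_summable c0 unfolding inner by (simp add: summable_cmult_iff)
  then have "(\<Sum>l. c * (T l * hypergeom [\<gamma> + 1 + real l, \<gamma> + 1 / 2] [\<gamma> + 2 + real l, \<gamma> + 1, 2 * \<gamma> + 1] (- (r\<^sup>2))))
      = c * (\<Sum>l. T l * hypergeom [\<gamma> + 1 + real l, \<gamma> + 1 / 2] [\<gamma> + 2 + real l, \<gamma> + 1, 2 * \<gamma> + 1] (- (r\<^sup>2)))"
    by (rule suminf_mult)
  then show ?thesis
    unfolding inner T_def c_def .
qed

lemma besselJ_sq_radial_FT_wendland_eq_series:
  fixes d :: nat and \<epsilon> \<mu> \<alpha> \<gamma> z :: real
  assumes d: "d \<ge> 1" and e: "\<epsilon> > 0" and mu: "\<mu> > -1" and a: "\<alpha> > 0" and g: "\<gamma> > -1/2" and z: "z > 0"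
  defines "lam \<equiv> (real d + 1) / 2 + \<alpha>"
  shows "z * (besselJ \<gamma> z)\<^sup>2 * radial_FT d (wendland \<mu> \<alpha> \<epsilon>) z
    = 2 powr lam * Gamma lam * Gamma (\<mu> + 1) / Gamma (2 * lam + \<mu>) / ((2 powr \<gamma> * Gamma (\<gamma> + 1))\<^sup>2)
        / (sqrt (2 * pi) * \<epsilon> ^ d)
      * (z powr (2 * \<gamma> + 1)
         * (\<Sum>n. hypergeom12_coeff (\<gamma> + 1/2) (\<gamma> + 1) (2 * \<gamma> + 1) n * (-1) ^ n * (z\<^sup>2) ^ n)
         * (\<Sum>l. hypergeom12_coeff lam (lam + \<mu> / 2) (lam + (\<mu> + 1) / 2) l * (- (1 / (4 * \<epsilon>\<^sup>2))) ^ l * (z\<^sup>2) ^ l))"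
proof -
  have J: "hypergeom [\<gamma> + 1/2] [\<gamma> + 1, 2 * \<gamma> + 1] (- z\<^sup>2)
      = (\<Sum>n. hypergeom12_coeff (\<gamma> + 1/2) (\<gamma> + 1) (2 * \<gamma> + 1) n * (-1) ^ n * (z\<^sup>2) ^ n)"
    unfolding hypergeom_1F2 power_minus[of "z\<^sup>2"] by (simp add: mult.assoc)
  have F: "hypergeom [lam] [lam + \<mu> / 2, lam + (\<mu> + 1) / 2] (- (z\<^sup>2 / (4 * \<epsilon>\<^sup>2)))
      = (\<Sum>l. hypergeom12_coeff lam (lam + \<mu> / 2) (lam + (\<mu> + 1) / 2) l * (- (1 / (4 * \<epsilon>\<^sup>2))) ^ l * (z\<^sup>2) ^ l)"
    unfolding hypergeom_1F2 by (simp add: mult.assoc flip: power_mult_distrib)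
  have p1: "(z / 2) powr (2 * \<gamma>) = z powr (2 * \<gamma>) / 2 powr (2 * \<gamma>)"
    using z by (simp add: powr_divide)
  have p2: "z powr (2 * \<gamma> + 1) = z * z powr (2 * \<gamma>)"
    using z by (simp add: powr_add)
  have p3: "(2 powr \<gamma>)\<^sup>2 = 2 powr (2 * \<gamma>)"
    by (simp add: power2_eq_square flip: powr_add)
  have P: "z * (z / 2) powr (2 * \<gamma>) * (rGamma (\<gamma> + 1))\<^sup>2 = z powr (2 * \<gamma> + 1) / (2 powr \<gamma> * Gamma (\<gamma> + 1))\<^sup>2"
    unfolding p1 p2 power_mult_distrib p3 by (simp add: rGamma_inverse_Gamma field_simps)
  have "z * (besselJ \<gamma> z)\<^sup>2 * radial_FT d (wendland \<mu> \<alpha> \<epsilon>) z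
    = (z * (z / 2) powr (2 * \<gamma>) * (rGamma (\<gamma> + 1))\<^sup>2) * hypergeom [\<gamma> + 1/2] [\<gamma> + 1, 2 * \<gamma> + 1] (- z\<^sup>2)
      * (2 powr lam * Gamma lam * Gamma (\<mu> + 1) / Gamma (2 * lam + \<mu>) / (sqrt (2 * pi) * \<epsilon> ^ d)
         * hypergeom [lam] [lam + \<mu> / 2, lam + (\<mu> + 1) / 2] (- (z\<^sup>2 / (4 * \<epsilon>\<^sup>2))))"
    unfolding besselJ_sq_eq_hypergeom[OF g z] radial_FT_wendland_eq_hypergeom[OF d e mu a z] lam_def
    by (simp only: mult_ac)
  then show ?thesis
    unfolding P J F by (simp add: divide_divide_eq_left mult_ac)
qed

theorem lemma4p2:
  fixes d :: nat and \<epsilon> \<mu> \<alpha> \<gamma> r :: real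
  assumes "d \<ge> 1" and "\<epsilon> > 0" and "\<mu> > -1" and "\<alpha> > 0" and "\<gamma> > 0" and "r > 0"
  shows "(let lam = (real d + 1) / 2 + \<alpha>;
              C = 2 powr lam * Gamma lam * Gamma (\<mu> + 1) / Gamma (2 * lam + \<mu>)
          in (2 * pi) powr (real d / 2) *
               integral {0..r} (\<lambda>z. z * (besselJ \<gamma> z)\<^sup>2 * radial_FT d (wendland \<mu> \<alpha> \<epsilon>) z)
             = (2 * pi) powr (real d / 2) *
               (C / ((2 powr \<gamma> * Gamma (\<gamma> + 1))\<^sup>2) / (sqrt (2 * pi) * \<epsilon> ^ d)) *
               (r powr (2 * (\<gamma> + 1)) / (2 * (\<gamma> + 1))) *
               (\<Sum>l. pochhammer (\<gamma> + 1) l * pochhammer lam l * (- (r\<^sup>2 / (4 * \<epsilon>\<^sup>2))) ^ l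
                      / (pochhammer (\<gamma> + 2) l * pochhammer (lam + \<mu> / 2) l
                         * pochhammer (lam + (\<mu> + 1) / 2) l * fact l)
                    * hypergeom [\<gamma> + 1 + real l, \<gamma> + 1 / 2]
                                [\<gamma> + 2 + real l, \<gamma> + 1, 2 * \<gamma> + 1] (- (r\<^sup>2))))"
proof -
  note d = assms(1) and e = assms(2) and mu = assms(3) and a = assms(4) and r = assms(6)
  have g: "\<gamma> > -1/2" using assms(5) by simp
  define lam where "lam = (real d + 1) / 2 + \<alpha>"
  define K where "K = 2 powr lam * Gamma lam * Gamma (\<mu> + 1) / Gamma (2 * lam + \<mu>)
    / ((2 powr \<gamma> * Gamma (\<gamma> + 1))\<^sup>2) / (sqrt (2 * pi) * \<epsilon> ^ d)"
  define A where "A = (\<lambda>l. hypergeom12_coeff lam (lam + \<mu> / 2) (lam + (\<mu> + 1) / 2) l * (- (1 / (4 * \<epsilon>\<^sup>2))) ^ l)"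
  define B where "B = (\<lambda>n. hypergeom12_coeff (\<gamma> + 1/2) (\<gamma> + 1) (2 * \<gamma> + 1) n * (-1) ^ n)"
  define V where "V = (\<lambda>l. \<Sum>n. B n * (r powr (2 * \<gamma> + 1 + 2 * real l + 2 * real n + 1)
    / (2 * \<gamma> + 1 + 2 * real l + 2 * real n + 1)))"
  have lam: "lam > 1/2" "lam + \<mu> / 2 > 0" "lam + (\<mu> + 1) / 2 > 0"
    using d a mu by (simp_all add: lam_def field_simps)
  have entire_A: "summable (\<lambda>l. \<bar>A l * x ^ l\<bar>)" for x
    unfolding A_def using lam by (intro summable_abs_hypergeom12_scaled)
  have entire_B: "summable (\<lambda>n. \<bar>B n * x ^ n\<bar>)" for x
    unfolding B_def using g by (intro summable_abs_hypergeom12_scaled) auto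
  have "((\<lambda>z. z powr (2 * \<gamma> + 1) * (\<Sum>n. B n * (z\<^sup>2) ^ n) * (\<Sum>l. A l * (z\<^sup>2) ^ l))
      has_integral (\<Sum>l. A l * V l)) {0..r}"
    unfolding V_def by (rule has_integral_powr_power_series_product[OF _ r entire_A entire_B]) (use g in simp)
  then have "((\<lambda>z. K * (z powr (2 * \<gamma> + 1) * (\<Sum>n. B n * (z\<^sup>2) ^ n) * (\<Sum>l. A l * (z\<^sup>2) ^ l)))
      has_integral K * (\<Sum>l. A l * V l)) {0..r}"
    by (rule has_integral_mult_right)
  then have "((\<lambda>z. z * (besselJ \<gamma> z)\<^sup>2 * radial_FT d (wendland \<mu> \<alpha> \<epsilon>) z) has_integral K * (\<Sum>l. A l * V l)) {0..r}"
    by (rule has_integral_spike[OF negligible_sing[of 0], rotated])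
      (simp add: K_def A_def B_def lam_def besselJ_sq_radial_FT_wendland_eq_series[OF d e mu a g])
  moreover have "(\<Sum>l. A l * V l) = r powr (2 * (\<gamma> + 1)) / (2 * (\<gamma> + 1)) *
    (\<Sum>l. pochhammer (\<gamma> + 1) l * pochhammer lam l * (- (r\<^sup>2 / (4 * \<epsilon>\<^sup>2))) ^ l
           / (pochhammer (\<gamma> + 2) l * pochhammer (lam + \<mu> / 2) l * pochhammer (lam + (\<mu> + 1) / 2) l * fact l)
         * hypergeom [\<gamma> + 1 + real l, \<gamma> + 1 / 2] [\<gamma> + 2 + real l, \<gamma> + 1, 2 * \<gamma> + 1] (- (r\<^sup>2)))"
  proof -
    have "summable (\<lambda>l. A l * V l)"
      unfolding V_def using g
      by (intro summable_powr_power_series_product[where q = "2 * \<gamma> + 1", OF _ r entire_A entire_B]) simp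
    then show ?thesis
      unfolding A_def V_def B_def by (rule sum_bessel_wendland_regroup[OF g r e lam(1) mu])
  qed
  ultimately show ?thesis
    unfolding Let_def lam_def[symmetric] K_def by (simp add: integral_unique mult_ac)
qed

end
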